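(* Suppose $\varphi(Y,Z)\in L^2(\mathbb P)$ and that the cdf $F_{X_0}$ of $X_0=\mathbb E[\varphi(Y,Z)\mid Y]$ is continuous. Then for every $\xi\in\mathbb R$, $$h_\ell^{-1/2}\big((X_{h_\ell}-\xi)^+-(X_{h_{\ell-1}}-\xi)^+\big)\xrightarrow{\ \mathcal L\ }\mathbf 1_{X_0>\xi}\,G\quad\text{as }\ell\uparrow\infty.$$
   Context: Let $Y$ ($\mathbb R^d$-valued) and $Z$ ($\mathbb R^q$-valued) be independent random variables and $\varphi:\mathbb R^d\times\mathbb R^q\to\mathbb R$ measurable. Fix integers $K\ge1$ and $M>1$, and set $h_\ell=\frac1{KM^\ell}$ for $\ell\ge0$. Let $(Z^{(k)})_{k\ge1}$ be i.i.d. copies of $Z$, independent of $Y$, and for $\ell\ge0$ let $X_{h_\ell}=\frac1{KM^\ell}\sum_{k=1}^{KM^\ell}\varphi(Y,Z^{(k)})$. Let $G=((M-1)\mathrm{Var}(\varphi(Y,Z)\mid Y))^{1/2}\mathfrak N$ with $\mathfrak N\sim\mathcal N(0,1)$ independent of $Y$ (so $X_0$, being $Y$-measurable, and $\mathfrak N$ are independent). *)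

theory Defs
  imports "HOL-Probability.Probability"
begin

definition real_cond_var :: "'a measure \<Rightarrow> 'a measure \<Rightarrow> ('a \<Rightarrow> real) \<Rightarrow> ('a \<Rightarrow> real)" where
  "real_cond_var M F f = real_cond_exp M F (\<lambda>x. (f x - real_cond_exp M F f x)^2)"

definition nested_X :: "nat \<Rightarrow> nat \<Rightarrow> ('y \<Rightarrow> 'z \<Rightarrow> real) \<Rightarrow> ('a \<Rightarrow> 'y) \<Rightarrow> (nat \<Rightarrow> 'a \<Rightarrow> 'z) \<Rightarrow> nat \<Rightarrow> 'a \<Rightarrow> real" where
  "nested_X K Mm \<phi> Y Zs l \<omega> =
     (1 / real (K * Mm ^ l)) * (\<Sum>k\<in>{1..K * Mm ^ l}. \<phi> (Y \<omega>) (Zs k \<omega>))"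

definition hstep :: "nat \<Rightarrow> nat \<Rightarrow> nat \<Rightarrow> real" where
  "hstep K Mm l = 1 / real (K * Mm ^ l)"

end

theory Submission
  imports Defs
begin

text \<open>Write \<open>n = K M\<^sup>l\<close>, \<open>n' = M n\<close> and let \<open>S\<^sub>n\<close> be the sample means. On the event \<open>X0 \<noteq> \<xi>\<close>,
  once both \<open>S\<^sub>n\<close> and \<open>S\<^sub>n\<^sub>'\<close> are closer to \<open>X0\<close> than \<open>\<xi>\<close> is, they lie on the same side of the kink
  of \<open>x \<mapsto> (x - \<xi>)\<^sup>+\<close>, so the increment equals \<open>1{X0 > \<xi>} \<surd>n' (S\<^sub>n\<^sub>' - S\<^sub>n)\<close>. As the sample means
  converge to \<open>X0\<close> in probability and \<open>X0\<close> has no atom at \<open>\<xi>\<close>, this happens with probability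
  tending to one, so both sequences have the same limit law.
  Conditionally on \<open>Y\<close>, \<open>\<surd>n' (S\<^sub>n\<^sub>' - S\<^sub>n)\<close> is a weighted sum of i.i.d. centred variables with variance
  \<open>v = Var(\<phi>(Y,Z) | Y)\<close>; its characteristic function factorises into powers of one characteristic
  function, whose second-order expansion gives the limit \<open>exp (- (M - 1) v t\<^sup>2 / 2)\<close>: the conditional
  characteristic function of \<open>G\<close>. Dominated convergence and Levy's continuity theorem conclude.\<close>

section \<open>Characteristic functions, independence and convergence in probability\<close>

lemma tendsto_one_plus_power_exp:
  fixes x :: "nat \<Rightarrow> real" and a :: "nat \<Rightarrow> nat"
  assumes x0: "x \<longlonglongrightarrow> 0" and x_nonpos: "\<And>n. x n \<le> 0"
    and ax: "(\<lambda>n. real (a n) * x n) \<longlonglongrightarrow> L"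
  shows "(\<lambda>n. (1 + x n) ^ a n) \<longlonglongrightarrow> exp L"
proof -
  have ev: "\<forall>\<^sub>F n in sequentially. - (1/2) \<le> x n"
    using x0 by (auto simp: tendsto_iff dist_real_def dest!: spec[of _ "1/2"] elim!: eventually_mono)
  have "(\<lambda>n. real (a n) * x n * (2 * x n)) \<longlonglongrightarrow> L * (2 * 0)"
    by (intro tendsto_intros ax x0)
  then have err_to_0: "(\<lambda>n. real (a n) * x n * (2 * x n)) \<longlonglongrightarrow> 0" by simp
  have "\<forall>\<^sub>F n in sequentially.
      norm (real (a n) * ln (1 + x n) - real (a n) * x n) \<le> real (a n) * x n * (2 * x n)"
    using ev
  proof (elim eventually_mono)
    fix n assume "- (1/2) \<le> x n"
    then have "\<bar>ln (1 + x n) - x n\<bar> \<le> 2 * (x n)\<^sup>2"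
      using abs_ln_one_plus_x_minus_x_bound_nonpos x_nonpos by blast
    then have "real (a n) * \<bar>ln (1 + x n) - x n\<bar> \<le> real (a n) * (2 * (x n)\<^sup>2)"
      by (intro mult_left_mono) auto
    moreover have "norm (real (a n) * ln (1 + x n) - real (a n) * x n) = real (a n) * \<bar>ln (1 + x n) - x n\<bar>"
      by (simp add: right_diff_distrib[symmetric] abs_mult)
    ultimately show "norm (real (a n) * ln (1 + x n) - real (a n) * x n) \<le> real (a n) * x n * (2 * x n)"
      by (simp add: power2_eq_square algebra_simps)
  qed
  then have "(\<lambda>n. real (a n) * ln (1 + x n) - real (a n) * x n) \<longlonglongrightarrow> 0"
    by (rule Lim_null_comparison) (rule err_to_0)
  then have "(\<lambda>n. exp ((real (a n) * ln (1 + x n) - real (a n) * x n) + real (a n) * x n)) \<longlonglongrightarrow> exp (0 + L)"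
    by (intro tendsto_exp tendsto_add ax)
  moreover have "\<forall>\<^sub>F n in sequentially.
      exp ((real (a n) * ln (1 + x n) - real (a n) * x n) + real (a n) * x n) = (1 + x n) ^ a n"
    using ev by eventually_elim (simp add: exp_of_nat_mult)
  ultimately show ?thesis
    by (simp add: tendsto_cong)
qed

text \<open>The characteristic-function form of the central limit theorem for the row sums of a
  triangular array with \<open>a n\<close> i.i.d. entries scaled by \<open>s n\<close>.\<close>
lemma (in real_distribution) char_power_tendsto_exp:
  fixes s :: "nat \<Rightarrow> real" and a :: "nat \<Rightarrow> nat"
  assumes int1: "integrable M (\<lambda>x. x)" and mean0: "expectation (\<lambda>x. x) = 0"
    and int2: "integrable M (\<lambda>x. x^2)"
    and s0: "s \<longlonglongrightarrow> 0" and as: "(\<lambda>n. real (a n) * (s n)^2) \<longlonglongrightarrow> c"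
  shows "(\<lambda>n. char M (s n) ^ a n) \<longlonglongrightarrow> complex_of_real (exp (- expectation (\<lambda>x. x^2) * c / 2))"
proof -
  define \<sigma>2 where "\<sigma>2 = expectation (\<lambda>x. x^2)"
  have \<sigma>2_nonneg: "\<sigma>2 \<ge> 0"
    unfolding \<sigma>2_def by (intro integral_nonneg_AE) auto
  define e where "e n = expectation (\<lambda>x. min (6 * x^2) (\<bar>s n\<bar> * \<bar>x\<bar>^3))" for n
  have approx: "cmod (char M (s n) - (1 - (s n)^2 * \<sigma>2 / 2)) \<le> ((s n)^2 / 6) * e n" for n
    unfolding e_def using mean0 by (intro char_approx3[OF int1 mean0 int2]) (simp add: \<sigma>2_def)
  have "e \<longlonglongrightarrow> expectation (\<lambda>x. 0)"
    unfolding e_def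
  proof (rule integral_dominated_convergence[where w = "\<lambda>x. 6 * x^2"])
    show "AE x in M. (\<lambda>n. min (6 * x\<^sup>2) (\<bar>s n\<bar> * \<bar>x\<bar> ^ 3)) \<longlonglongrightarrow> 0"
    proof (rule AE_I2)
      fix x
      have "(\<lambda>n. min (6 * x\<^sup>2) (\<bar>s n\<bar> * \<bar>x\<bar> ^ 3)) \<longlonglongrightarrow> min (6 * x\<^sup>2) (\<bar>0\<bar> * \<bar>x\<bar> ^ 3)"
        by (intro tendsto_intros s0)
      then show "(\<lambda>n. min (6 * x\<^sup>2) (\<bar>s n\<bar> * \<bar>x\<bar> ^ 3)) \<longlonglongrightarrow> 0" by simp
    qed
  qed (use int2 in auto)
  then have e0: "e \<longlonglongrightarrow> 0" by simp
  define x where "x n = - ((s n)^2 * \<sigma>2 / 2)" for n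
  have "(\<lambda>n. - ((s n)^2 * \<sigma>2 / 2)) \<longlonglongrightarrow> - (0^2 * \<sigma>2 / 2)"
    by (intro tendsto_intros s0; simp)
  then have x0: "x \<longlonglongrightarrow> 0" by (simp add: x_def[abs_def])
  have x_nonpos: "x n \<le> 0" for n
    using \<sigma>2_nonneg by (simp add: x_def)
  have "(\<lambda>n. - (real (a n) * (s n)^2) * \<sigma>2 / 2) \<longlonglongrightarrow> - c * \<sigma>2 / 2"
    by (intro tendsto_intros as; simp)
  then have "(\<lambda>n. real (a n) * x n) \<longlonglongrightarrow> - \<sigma>2 * c / 2"
    by (simp add: x_def algebra_simps)
  then have "(\<lambda>n. complex_of_real ((1 + x n) ^ a n)) \<longlonglongrightarrow> complex_of_real (exp (- \<sigma>2 * c / 2))"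
    by (intro tendsto_of_real tendsto_one_plus_power_exp x0 x_nonpos)
  moreover have "(\<lambda>n. char M (s n) ^ a n - complex_of_real ((1 + x n) ^ a n)) \<longlonglongrightarrow> 0"
  proof (rule Lim_null_comparison)
    have "(\<lambda>n. (real (a n) * (s n)^2) / 6 * e n) \<longlonglongrightarrow> c / 6 * 0"
      by (intro tendsto_intros as e0; simp)
    then show "(\<lambda>n. (real (a n) * (s n)^2) / 6 * e n) \<longlonglongrightarrow> 0" by simp
    have "\<forall>\<^sub>F n in sequentially. - 1 \<le> x n"
      using x0 by (auto simp: tendsto_iff dist_real_def dest!: spec[of _ "1"] elim!: eventually_mono)
    then show "\<forall>\<^sub>F n in sequentially. norm (char M (s n) ^ a n - complex_of_real ((1 + x n) ^ a n))
        \<le> (real (a n) * (s n)^2) / 6 * e n"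
    proof (elim eventually_mono)
      fix n assume "- 1 \<le> x n"
      then have "norm (complex_of_real (1 + x n)) \<le> 1"
        unfolding norm_of_real using x_nonpos[of n] by simp
      then have "norm (char M (s n) ^ a n - complex_of_real (1 + x n) ^ a n)
          \<le> real (a n) * norm (char M (s n) - complex_of_real (1 + x n))"
        by (intro norm_power_diff cmod_char_le_1)
      also have "\<dots> \<le> real (a n) * (((s n)^2 / 6) * e n)"
        using approx[of n] by (intro mult_left_mono) (auto simp: x_def)
      finally show "norm (char M (s n) ^ a n - complex_of_real ((1 + x n) ^ a n))
          \<le> (real (a n) * (s n)^2) / 6 * e n" by simp
    qed
  qed
  ultimately have "(\<lambda>n. (char M (s n) ^ a n - complex_of_real ((1 + x n) ^ a n))
      + complex_of_real ((1 + x n) ^ a n)) \<longlonglongrightarrow> 0 + complex_of_real (exp (- \<sigma>2 * c / 2))"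
    by (intro tendsto_add)
  then show ?thesis by (simp add: \<sigma>2_def)
qed

lemma (in prob_space) distr_Pair_eq_pair_measure_if_indep_set:
  assumes X[measurable]: "X \<in> measurable M S" and W[measurable]: "W \<in> measurable M T"
    and indep: "indep_set (sets (vimage_algebra (space M) X S)) (sets (vimage_algebra (space M) W T))"
  shows "distr M (S \<Otimes>\<^sub>M T) (\<lambda>\<omega>. (X \<omega>, W \<omega>)) = distr M S X \<Otimes>\<^sub>M distr M T W"
proof (rule pair_measure_eqI[symmetric])
  show "sigma_finite_measure (distr M S X)" "sigma_finite_measure (distr M T W)"
    by (intro prob_space_imp_sigma_finite prob_space_distr X W)+
  show "sets (distr M S X \<Otimes>\<^sub>M distr M T W) = sets (distr M (S \<Otimes>\<^sub>M T) (\<lambda>\<omega>. (X \<omega>, W \<omega>)))"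
    by (simp only: sets_distr sets_pair_measure_cong[OF sets_distr sets_distr])
  fix A B assume "A \<in> sets (distr M S X)" and "B \<in> sets (distr M T W)"
  then have A: "A \<in> sets S" and B: "B \<in> sets T" by auto
  have "(\<lambda>\<omega>. (X \<omega>, W \<omega>)) -` (A \<times> B) \<inter> space M = (X -` A \<inter> space M) \<inter> (W -` B \<inter> space M)"
    by auto
  then have "emeasure (distr M (S \<Otimes>\<^sub>M T) (\<lambda>\<omega>. (X \<omega>, W \<omega>))) (A \<times> B)
      = ennreal (prob ((X -` A \<inter> space M) \<inter> (W -` B \<inter> space M)))"
    using A B by (simp add: emeasure_distr emeasure_eq_measure)
  also have "prob ((X -` A \<inter> space M) \<inter> (W -` B \<inter> space M)) = prob (X -` A \<inter> space M) * prob (W -` B \<inter> space M)"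
    by (rule indep_setD[OF indep in_vimage_algebra[OF A] in_vimage_algebra[OF B]])
  finally show "emeasure (distr M S X) A * emeasure (distr M T W) B =
      emeasure (distr M (S \<Otimes>\<^sub>M T) (\<lambda>\<omega>. (X \<omega>, W \<omega>))) (A \<times> B)"
    using A B by (simp add: emeasure_distr emeasure_eq_measure ennreal_mult)
qed

lemma integrable_if_norm_le_1:
  fixes h :: "'x \<Rightarrow> 'b::{banach, second_countable_topology}"
  assumes "prob_space Q" "h \<in> borel_measurable Q" "\<And>x. norm (h x) \<le> 1"
  shows "integrable Q h"
proof -
  interpret prob_space Q by fact
  show ?thesis by (rule integrable_const_bound[where B=1]) (use assms in auto)
qed

lemma (in prob_space) tendsto_prob_abs_ge_if_char_tendsto_1:
  assumes X[measurable]: "\<And>n. X n \<in> borel_measurable M"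
    and char_to_1: "\<And>t. (\<lambda>n. char (distr M borel (X n)) t) \<longlonglongrightarrow> 1"
    and "\<delta> > 0"
  shows "(\<lambda>n. prob {\<omega> \<in> space M. \<delta> \<le> \<bar>X n \<omega>\<bar>}) \<longlonglongrightarrow> 0"
proof -
  interpret D0: real_distribution "return borel (0::real)"
    by (auto simp: real_distribution_def real_distribution_axioms_def intro!: prob_space_return)
  have "weak_conv_m (\<lambda>n. distr M borel (X n)) (return borel 0)"
  proof (rule levy_continuity)
    show "(\<lambda>n. char (distr M borel (X n)) t) \<longlonglongrightarrow> char (return borel 0) t" for t
      using char_to_1[of t] by (simp add: char_def integral_return)
  qed (simp_all add: D0.real_distribution_axioms)
  then have cdf_lim: "(\<lambda>n. prob {\<omega> \<in> space M. X n \<omega> \<le> x}) \<longlonglongrightarrow> (if 0 \<le> x then 1 else 0)"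
    if "x \<noteq> 0" for x
  proof -
    have "isCont (cdf (return borel (0::real))) x"
      using that by (subst D0.isCont_cdf) (simp add: measure_return)
    then have "(\<lambda>n. cdf (distr M borel (X n)) x) \<longlonglongrightarrow> cdf (return borel 0) x"
      using \<open>weak_conv_m _ _\<close> by (simp add: weak_conv_m_def weak_conv_def)
    moreover have "cdf (return borel (0::real)) x = (if 0 \<le> x then 1 else 0)"
      by (simp add: cdf_def measure_return)
    moreover have "cdf (distr M borel (X n)) x = prob {\<omega> \<in> space M. X n \<omega> \<le> x}" for n
      unfolding cdf_def by (subst measure_distr) (auto intro!: arg_cong[where f=prob])
    ultimately show ?thesis
      by simp
  qed
  have lim: "(\<lambda>n. prob {\<omega> \<in> space M. X n \<omega> \<le> - \<delta>} + (1 - prob {\<omega> \<in> space M. X n \<omega> \<le> \<delta> / 2}))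
      \<longlonglongrightarrow> 0 + (1 - 1)"
    using cdf_lim[of "- \<delta>"] cdf_lim[of "\<delta> / 2"] \<open>\<delta> > 0\<close> by (intro tendsto_intros) simp_all
  have bound: "norm (prob {\<omega> \<in> space M. \<delta> \<le> \<bar>X n \<omega>\<bar>})
      \<le> prob {\<omega> \<in> space M. X n \<omega> \<le> - \<delta>} + (1 - prob {\<omega> \<in> space M. X n \<omega> \<le> \<delta> / 2})" for n
  proof -
    have "prob {\<omega> \<in> space M. \<delta> \<le> \<bar>X n \<omega>\<bar>}
        \<le> prob ({\<omega> \<in> space M. X n \<omega> \<le> - \<delta>} \<union> (space M - {\<omega> \<in> space M. X n \<omega> \<le> \<delta> / 2}))"
      using \<open>\<delta> > 0\<close> by (intro finite_measure_mono) auto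
    also have "\<dots> \<le> prob {\<omega> \<in> space M. X n \<omega> \<le> - \<delta>} + prob (space M - {\<omega> \<in> space M. X n \<omega> \<le> \<delta> / 2})"
      by (intro measure_Un_le) auto
    also have "prob (space M - {\<omega> \<in> space M. X n \<omega> \<le> \<delta> / 2}) = 1 - prob {\<omega> \<in> space M. X n \<omega> \<le> \<delta> / 2}"
      by (intro prob_compl) auto
    finally show ?thesis by simp
  qed
  show ?thesis
    using Lim_null_comparison[OF always_eventually[OF allI[OF bound]]] lim by simp
qed

lemma (in prob_space) tendsto_prob_crossing:
  fixes W :: "'a \<Rightarrow> real" and U :: "nat \<Rightarrow> 'a \<Rightarrow> real"
  assumes W[measurable]: "W \<in> borel_measurable M" and U[measurable]: "\<And>n. U n \<in> borel_measurable M"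
    and U_to_0: "\<And>\<delta>. \<delta> > 0 \<Longrightarrow> (\<lambda>n. prob {\<omega> \<in> space M. \<delta> \<le> \<bar>U n \<omega>\<bar>}) \<longlonglongrightarrow> 0"
  shows "(\<lambda>n. prob {\<omega> \<in> space M. W \<omega> \<noteq> 0 \<and> \<bar>W \<omega>\<bar> \<le> \<bar>U n \<omega>\<bar>}) \<longlonglongrightarrow> 0"
proof (rule tendstoI)
  fix e :: real assume "e > 0"
  define A where "A j = {\<omega> \<in> space M. 0 < \<bar>W \<omega>\<bar> \<and> \<bar>W \<omega>\<bar> < 1 / real (Suc j)}" for j
  have A_sets: "range A \<subseteq> sets M" unfolding A_def by auto
  have "decseq A"
  proof (rule decseq_SucI)
    fix j
    have "1 / real (Suc (Suc j)) \<le> 1 / real (Suc j)" by (simp add: frac_le)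
    then show "A (Suc j) \<subseteq> A j" unfolding A_def by fastforce
  qed
  moreover have "(\<Inter>j. A j) = {}"
  proof (rule ccontr)
    assume "(\<Inter>j. A j) \<noteq> {}"
    then obtain \<omega> where \<omega>: "\<And>j. \<omega> \<in> A j" by blast
    then have "0 < \<bar>W \<omega>\<bar>" unfolding A_def by auto
    then obtain j where "1 / real (Suc j) < \<bar>W \<omega>\<bar>"
      using reals_Archimedean by (metis inverse_eq_divide)
    with \<omega>[of j] show False unfolding A_def by auto
  qed
  ultimately have "(\<lambda>j. prob (A j)) \<longlonglongrightarrow> 0"
    using finite_Lim_measure_decseq[OF A_sets] by simp
  then obtain j where j: "prob (A j) < e / 2"
    using \<open>e > 0\<close> order_tendstoD(2)[of _ 0 _ "e / 2"] eventually_sequentially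
    by (metis half_gt_zero order_refl)
  have "\<forall>\<^sub>F n in sequentially. prob {\<omega> \<in> space M. 1 / real (Suc j) \<le> \<bar>U n \<omega>\<bar>} < e / 2"
    using U_to_0[of "1 / real (Suc j)"] \<open>e > 0\<close> by (auto dest!: order_tendstoD(2)[of _ 0 _ "e / 2"])
  then show "\<forall>\<^sub>F n in sequentially. dist (prob {\<omega> \<in> space M. W \<omega> \<noteq> 0 \<and> \<bar>W \<omega>\<bar> \<le> \<bar>U n \<omega>\<bar>}) 0 < e"
  proof (elim eventually_mono)
    fix n assume n: "prob {\<omega> \<in> space M. 1 / real (Suc j) \<le> \<bar>U n \<omega>\<bar>} < e / 2"
    have "prob {\<omega> \<in> space M. W \<omega> \<noteq> 0 \<and> \<bar>W \<omega>\<bar> \<le> \<bar>U n \<omega>\<bar>}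
        \<le> prob (A j \<union> {\<omega> \<in> space M. 1 / real (Suc j) \<le> \<bar>U n \<omega>\<bar>})"
      using A_sets by (intro finite_measure_mono) (auto simp: A_def)
    also have "\<dots> \<le> prob (A j) + prob {\<omega> \<in> space M. 1 / real (Suc j) \<le> \<bar>U n \<omega>\<bar>}"
      using A_sets by (intro measure_Un_le) auto
    finally show "dist (prob {\<omega> \<in> space M. W \<omega> \<noteq> 0 \<and> \<bar>W \<omega>\<bar> \<le> \<bar>U n \<omega>\<bar>}) 0 < e"
      using j n by simp
  qed
qed

lemma (in prob_space) norm_char_distr_diff_le:
  assumes [measurable]: "X \<in> borel_measurable M" "X' \<in> borel_measurable M" "B \<in> sets M"
    and eq_outside: "\<And>\<omega>. \<omega> \<in> space M - B \<Longrightarrow> X \<omega> = X' \<omega>"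
  shows "norm (char (distr M borel X) t - char (distr M borel X') t) \<le> 2 * prob B"
proof -
  have int: "integrable M (\<lambda>\<omega>. iexp (t * X \<omega>))" "integrable M (\<lambda>\<omega>. iexp (t * X' \<omega>))"
    by (intro integrable_if_norm_le_1 prob_space_axioms; simp)+
  have "char (distr M borel X) t - char (distr M borel X') t
      = (\<integral>\<omega>. iexp (t * X \<omega>) \<partial>M) - (\<integral>\<omega>. iexp (t * X' \<omega>) \<partial>M)"
    unfolding char_def by (subst (1 2) integral_distr) simp_all
  also have "\<dots> = (\<integral>\<omega>. iexp (t * X \<omega>) - iexp (t * X' \<omega>) \<partial>M)"
    by (rule Bochner_Integration.integral_diff[OF int, symmetric])
  finally have "norm (char (distr M borel X) t - char (distr M borel X') t)
      \<le> (\<integral>\<omega>. norm (iexp (t * X \<omega>) - iexp (t * X' \<omega>)) \<partial>M)"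
    by simp
  also have "\<dots> \<le> (\<integral>\<omega>. 2 * indicator B \<omega> \<partial>M)"
  proof (rule integral_mono)
    show "integrable M (\<lambda>\<omega>. 2 * indicator B \<omega> :: real)"
      using emeasure_finite[of B]
      by (intro integrable_mult_right integrable_real_indicator) (auto simp: less_top[symmetric])
    fix \<omega> assume "\<omega> \<in> space M"
    show "norm (iexp (t * X \<omega>) - iexp (t * X' \<omega>)) \<le> 2 * indicator B \<omega>"
    proof (cases "\<omega> \<in> B")
      case True
      then show ?thesis
        using norm_triangle_ineq4[of "iexp (t * X \<omega>)" "iexp (t * X' \<omega>)"] by simp
    qed (use \<open>\<omega> \<in> space M\<close> eq_outside in simp)
  qed (use int in simp)
  finally show ?thesis by simp
qed

lemma filterlim_geometric_sample_sizes:
  fixes K Mm :: nat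
  assumes "K \<ge> 1" "Mm > 1"
  shows "filterlim (\<lambda>l. K * Mm ^ l) at_top sequentially"
proof (rule filterlim_at_top_mono[OF filterlim_ident always_eventually], intro allI)
  fix l
  have "l < 2 ^ l" by simp
  also have "(2::nat) ^ l \<le> Mm ^ l" using assms by (intro power_mono) auto
  also have "\<dots> \<le> K * Mm ^ l" using assms by simp
  finally show "l \<le> K * Mm ^ l" by simp
qed

text \<open>In \<open>t \<surd>n' (S\<^sub>n\<^sub>' - S\<^sub>n)\<close> with \<open>n = K M\<^sup>l\<close>, \<open>n' = M n\<close>, the first \<open>n\<close> centred summands carry
  weight \<open>s\<^sub>1\<close> and the remaining \<open>n' - n\<close> carry weight \<open>s\<^sub>2\<close>.\<close>
lemma geometric_increment_weights:
  fixes K Mm :: nat and t :: real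
  assumes K: "K \<ge> 1" and Mm: "Mm > 1"
  defines "n \<equiv> \<lambda>l. K * Mm ^ l"
  defines "s\<^sub>1 \<equiv> \<lambda>l. t * sqrt (real (n (Suc l))) * (1 / real (n (Suc l)) - 1 / real (n l))"
    and "s\<^sub>2 \<equiv> \<lambda>l. t * sqrt (real (n (Suc l))) * (1 / real (n (Suc l)))"
  shows "s\<^sub>1 \<longlonglongrightarrow> 0" "s\<^sub>2 \<longlonglongrightarrow> 0"
    and "real (n l) * (s\<^sub>1 l)^2 = t^2 * (real Mm - 1)^2 / real Mm"
    and "real (n (Suc l) - n l) * (s\<^sub>2 l)^2 = t^2 * (real Mm - 1) / real Mm"
proof -
  have n_pos: "0 < real (n l)" for l using K Mm by (simp add: n_def)
  have n_Suc: "real (n (Suc l)) = real Mm * real (n l)" for l by (simp add: n_def)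
  have s1_sq: "(s\<^sub>1 l)^2 = t^2 * (real Mm - 1)^2 / real Mm / real (n l)" for l
    using n_pos[of l] n_pos[of "Suc l"] Mm
    by (simp add: s\<^sub>1_def power_mult_distrib n_Suc field_simps power2_eq_square)
  have s2_sq: "(s\<^sub>2 l)^2 = t^2 / real Mm / real (n l)" for l
    using n_pos[of l] n_pos[of "Suc l"] Mm
    by (simp add: s\<^sub>2_def power_mult_distrib n_Suc field_simps power2_eq_square)
  have "filterlim (\<lambda>l. real (n l)) at_infinity sequentially"
    unfolding n_def
    by (intro filterlim_at_top_imp_at_infinity filterlim_compose[OF filterlim_real_sequentially]
        filterlim_geometric_sample_sizes K Mm)
  then have inverse_to_0: "(\<lambda>l. c / real (n l)) \<longlonglongrightarrow> 0" for c
    by (intro tendsto_divide_0[OF tendsto_const])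
  have "(\<lambda>l. (s\<^sub>1 l)^2) \<longlonglongrightarrow> 0" "(\<lambda>l. (s\<^sub>2 l)^2) \<longlonglongrightarrow> 0"
    unfolding s1_sq s2_sq by (rule inverse_to_0)+
  then show "s\<^sub>1 \<longlonglongrightarrow> 0" "s\<^sub>2 \<longlonglongrightarrow> 0"
    by simp_all
  show "real (n l) * (s\<^sub>1 l)^2 = t^2 * (real Mm - 1)^2 / real Mm"
    using n_pos[of l] by (simp add: s1_sq)
  have "real (n (Suc l) - n l) = (real Mm - 1) * real (n l)"
    using Mm by (simp add: of_nat_diff n_def algebra_simps)
  then show "real (n (Suc l) - n l) * (s\<^sub>2 l)^2 = t^2 * (real Mm - 1) / real Mm"
    using n_pos[of l] by (simp add: s2_sq)
qed

section \<open>The nested Monte Carlo setting\<close>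

locale nested_mc = prob_space M for M :: "'a measure" +
  fixes Y :: "'a \<Rightarrow> real ^ 'd"
    and Z :: "'a \<Rightarrow> real ^ 'q"
    and Zs :: "nat \<Rightarrow> 'a \<Rightarrow> real ^ 'q"
    and \<phi> :: "real ^ 'd \<Rightarrow> real ^ 'q \<Rightarrow> real"
    and N :: "'a \<Rightarrow> real"
  assumes Y_meas[measurable]: "Y \<in> borel_measurable M"
    and Z_meas[measurable]: "Z \<in> borel_measurable M"
    and Zs_meas[measurable]: "\<And>k. Zs k \<in> borel_measurable M"
    and phi_meas: "(\<lambda>(y, z). \<phi> y z) \<in> borel_measurable borel"
    and indep_YZ: "indep_set (sets (vimage_algebra (space M) Y borel))
                             (sets (vimage_algebra (space M) Z borel))"
    and Zs_copies: "\<And>k. k \<ge> 1 \<Longrightarrow> distr M borel (Zs k) = distr M borel Z"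
    and indep_Y_Zs: "indep_sets
          (\<lambda>i. case i of None \<Rightarrow> sets (vimage_algebra (space M) Y borel)
                       | Some k \<Rightarrow> sets (vimage_algebra (space M) (Zs k) borel))
          (insert None (Some ` {1..}))"
    and N_meas[measurable]: "N \<in> borel_measurable M"
    and N_normal: "distr M borel N = density lborel std_normal_density"
    and indep_NY: "indep_set (sets (vimage_algebra (space M) Y borel))
                             (sets (vimage_algebra (space M) N borel))"
    and L2: "integrable M (\<lambda>\<omega>. (\<phi> (Y \<omega>) (Z \<omega>))^2)"
begin

abbreviation "PY \<equiv> distr M borel Y"
abbreviation "PZ \<equiv> distr M borel Z"

lemma phi_measurable[measurable (raw)]:
  assumes [measurable]: "f \<in> borel_measurable Q" "g \<in> borel_measurable Q"
  shows "(\<lambda>x. \<phi> (f x) (g x)) \<in> borel_measurable Q"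
proof -
  have "(\<lambda>x. (f x, g x)) \<in> measurable Q borel"
    unfolding borel_prod[symmetric] by measurable
  from measurable_compose[OF this phi_meas] show ?thesis by simp
qed

lemma phi_measurable_pair: "(\<lambda>p. \<phi> (fst p) (snd p)) \<in> borel_measurable (borel \<Otimes>\<^sub>M borel)"
  by measurable

lemma prob_space_PY: "prob_space PY" and prob_space_PZ: "prob_space PZ"
  by (intro prob_space_distr; simp)+

lemma sigma_finite_PZ: "sigma_finite_measure PZ"
  by (rule prob_space_imp_sigma_finite[OF prob_space_PZ])

lemma pair_sigma_finite_PY_PZ: "pair_sigma_finite PY PZ"
  by (intro pair_sigma_finite.intro prob_space_imp_sigma_finite prob_space_PY prob_space_PZ)

lemma measurable_integral_PZ:
  fixes h :: "real^'d \<Rightarrow> real^'q \<Rightarrow> 'b::{banach, second_countable_topology}"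
  assumes "(\<lambda>p. h (fst p) (snd p)) \<in> borel_measurable (borel \<Otimes>\<^sub>M borel)"
  shows "(\<lambda>y. \<integral>z. h y z \<partial>PZ) \<in> borel_measurable borel"
  by (rule sigma_finite_measure.borel_measurable_lebesgue_integral[OF sigma_finite_PZ])
     (use assms in \<open>simp add: case_prod_beta' measurable_cong_sets[OF sets_pair_measure_cong[OF refl sets_distr] refl]\<close>)

lemma distr_YZ: "distr M (borel \<Otimes>\<^sub>M borel) (\<lambda>\<omega>. (Y \<omega>, Z \<omega>)) = PY \<Otimes>\<^sub>M PZ"
  by (rule distr_Pair_eq_pair_measure_if_indep_set[OF Y_meas Z_meas indep_YZ])

lemma distr_YN: "distr M (borel \<Otimes>\<^sub>M borel) (\<lambda>\<omega>. (Y \<omega>, N \<omega>)) = PY \<Otimes>\<^sub>M distr M borel N"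
  by (rule distr_Pair_eq_pair_measure_if_indep_set[OF Y_meas N_meas indep_NY])

text \<open>\<open>Y\<close> and the \<open>Z\<^sup>(\<^sup>k\<^sup>)\<close> have different types; embedding both into \<open>real^'d \<times> real^'q\<close> lets
  their joint independence be expressed by a single \<open>indep_vars\<close>.\<close>
definition YZs :: "nat option \<Rightarrow> 'a \<Rightarrow> (real ^ 'd) \<times> (real ^ 'q)" where
  "YZs i \<omega> = (case i of None \<Rightarrow> (Y \<omega>, 0) | Some k \<Rightarrow> (0, Zs k \<omega>))"

lemma YZs_measurable[measurable]: "YZs i \<in> borel_measurable M"
  by (cases i) (auto simp: YZs_def[abs_def] borel_prod[symmetric])

lemma vimage_sets_comp_subset:
  assumes "f \<in> borel_measurable (borel :: 'b::topological_space measure)"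
  shows "{(\<lambda>\<omega>. f (W \<omega>)) -` A \<inter> space M | A. A \<in> sets borel}
      \<subseteq> sets (vimage_algebra (space M) W (borel :: 'b measure))"
proof safe
  fix A :: "'c set" assume "A \<in> sets borel"
  then have "f -` A \<in> sets borel"
    using measurable_sets[OF assms] by simp
  then show "(\<lambda>\<omega>. f (W \<omega>)) -` A \<inter> space M \<in> sets (vimage_algebra (space M) W borel)"
    using in_vimage_algebra[of "f -` A" borel W "space M"] by (simp add: vimage_def)
qed

lemma indep_vars_YZs: "indep_vars (\<lambda>_. borel) YZs (insert None (Some ` {1..n}))"
  unfolding indep_vars_def2
proof (intro conjI ballI)
  show "indep_sets (\<lambda>i. {YZs i -` A \<inter> space M |A. A \<in> sets borel}) (insert None (Some ` {1..n}))"
  proof (rule indep_sets_mono[OF indep_Y_Zs])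
    fix i
    show "{YZs i -` A \<inter> space M |A. A \<in> sets borel} \<subseteq>
        (case i of None \<Rightarrow> sets (vimage_algebra (space M) Y borel)
         | Some k \<Rightarrow> sets (vimage_algebra (space M) (Zs k) borel))"
    proof (cases i)
      case None
      have "(\<lambda>y::real^'d. (y, 0::real^'q)) \<in> borel_measurable borel"
        unfolding borel_prod[symmetric] by measurable
      from vimage_sets_comp_subset[OF this, of Y] None show ?thesis
        by (simp add: YZs_def[abs_def])
    next
      case (Some k)
      have "(\<lambda>z::real^'q. (0::real^'d, z)) \<in> borel_measurable borel"
        unfolding borel_prod[symmetric] by measurable
      from vimage_sets_comp_subset[OF this, of "Zs k"] Some show ?thesis
        by (simp add: YZs_def[abs_def])
    qed
  qed auto
qed simp

definition "PYZs i = distr M borel (YZs i)"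

lemma prob_space_PYZs: "prob_space (PYZs i)"
  unfolding PYZs_def by (rule prob_space_distr) simp

lemma sets_PYZs[simp]: "sets (PYZs i) = sets borel" and space_PYZs[simp]: "space (PYZs i) = UNIV"
  by (simp_all add: PYZs_def)

lemma integral_PiM_PYZs_Some:
  fixes h :: "nat \<Rightarrow> real^'q \<Rightarrow> complex"
  assumes [measurable]: "\<And>k. h k \<in> borel_measurable borel" and h_le_1: "\<And>k z. norm (h k z) \<le> 1"
  shows "(\<integral>X. (\<Prod>k\<in>{1..n}. h k (snd (X (Some k)))) \<partial>(\<Pi>\<^sub>M i\<in>Some ` {1..n}. PYZs i))
    = (\<Prod>k\<in>{1..n}. \<integral>z. h k z \<partial>PZ)"
proof -
  interpret product_sigma_finite PYZs
    unfolding product_sigma_finite_def using prob_space_PYZs prob_space_imp_sigma_finite by blast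
  have "snd \<in> borel_measurable (borel :: ((real^'d) \<times> (real^'q)) measure)"
    using measurable_snd[of "borel :: (real^'d) measure" "borel :: (real^'q) measure"]
    by (simp add: borel_prod)
  then have h_snd_meas: "(\<lambda>w. h k (snd w)) \<in> borel_measurable (PYZs j)" for k j
    by (simp add: measurable_cong_sets[OF sets_PYZs refl] measurable_compose[where g="h k"])
  have "(\<integral>X. (\<Prod>k\<in>{1..n}. h k (snd (X (Some k)))) \<partial>(\<Pi>\<^sub>M i\<in>Some ` {1..n}. PYZs i))
      = (\<integral>X. (\<Prod>j\<in>Some ` {1..n}. h (the j) (snd (X j))) \<partial>(\<Pi>\<^sub>M i\<in>Some ` {1..n}. PYZs i))"
    by (simp add: prod.reindex)
  also have "\<dots> = (\<Prod>j\<in>Some ` {1..n}. \<integral>w. h (the j) (snd w) \<partial>PYZs j)"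
    by (rule product_integral_prod) (auto intro!: integrable_if_norm_le_1 prob_space_PYZs h_le_1 h_snd_meas)
  also have "\<dots> = (\<Prod>k\<in>{1..n}. \<integral>z. h k z \<partial>distr M borel (Zs k))"
  proof -
    have "(\<integral>w. h k (snd w) \<partial>PYZs (Some k)) = (\<integral>z. h k z \<partial>distr M borel (Zs k))" for k
    proof -
      have "(\<lambda>w. h k (snd w)) \<in> borel_measurable (borel :: ((real^'d) \<times> (real^'q)) measure)"
        using h_snd_meas[of k "Some k"] by (simp add: measurable_cong_sets[OF sets_PYZs refl])
      then show ?thesis
        unfolding PYZs_def by (simp add: integral_distr YZs_def)
    qed
    then show ?thesis by (simp add: prod.reindex)
  qed
  also have "\<dots> = (\<Prod>k\<in>{1..n}. \<integral>z. h k z \<partial>PZ)"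
    by (intro prod.cong refl) (simp add: Zs_copies)
  finally show ?thesis .
qed

text \<open>Conditionally on \<open>Y\<close> the \<open>Z\<^sup>(\<^sup>k\<^sup>)\<close> are i.i.d. with law \<open>PZ\<close>, so they can be integrated out
  one by one.\<close>
lemma integral_mult_prod_Zs:
  fixes g :: "real^'d \<Rightarrow> complex" and f :: "nat \<Rightarrow> real^'d \<Rightarrow> real^'q \<Rightarrow> complex"
  assumes g_meas[measurable]: "g \<in> borel_measurable borel" and g_le_1: "\<And>y. norm (g y) \<le> 1"
    and f_meas: "\<And>k. (\<lambda>p. f k (fst p) (snd p)) \<in> borel_measurable (borel \<Otimes>\<^sub>M borel)"
    and f_le_1: "\<And>k y z. norm (f k y z) \<le> 1"
  shows "(\<integral>\<omega>. g (Y \<omega>) * (\<Prod>k\<in>{1..n}. f k (Y \<omega>) (Zs k \<omega>)) \<partial>M)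
       = (\<integral>\<omega>. g (Y \<omega>) * (\<Prod>k\<in>{1..n}. \<integral>z. f k (Y \<omega>) z \<partial>PZ) \<partial>M)"
proof -
  have f_comp_meas[measurable (raw)]: "(\<lambda>x. f k (a x) (b x)) \<in> borel_measurable Q"
    if [measurable]: "a \<in> borel_measurable Q" "b \<in> borel_measurable Q" for k a b and Q :: "'x measure"
    using measurable_compose[OF _ f_meas[of k], of "\<lambda>x. (a x, b x)"] by simp
  have [measurable]: "(\<lambda>y. \<integral>z. f k y z \<partial>PZ) \<in> borel_measurable borel" for k
    by (rule measurable_integral_PZ[OF f_meas])
  define J where "J = Some ` {1..n}"
  define I where "I = insert None J"
  let ?B = "\<Pi>\<^sub>M i\<in>I. (borel :: ((real^'d) \<times> (real^'q)) measure)"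
  let ?P = "\<Pi>\<^sub>M i\<in>I. PYZs i"
  let ?Q = "\<Pi>\<^sub>M i\<in>J. PYZs i"
  define G where "G X = g (fst (X None)) * (\<Prod>k\<in>{1..n}. f k (fst (X None)) (snd (X (Some k))))"
    for X :: "nat option \<Rightarrow> (real^'d) \<times> (real^'q)"
  have fst_meas: "fst \<in> borel_measurable (borel :: ((real^'d) \<times> (real^'q)) measure)"
    using measurable_fst[of "borel :: (real^'d) measure" "borel :: (real^'q) measure"] by (simp add: borel_prod)
  have snd_meas: "snd \<in> borel_measurable (borel :: ((real^'d) \<times> (real^'q)) measure)"
    using measurable_snd[of "borel :: (real^'d) measure" "borel :: (real^'q) measure"] by (simp add: borel_prod)
  have comp_None_meas: "(\<lambda>X. fst (X None)) \<in> borel_measurable ?B"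
    using measurable_compose[OF measurable_component_singleton[of None I] fst_meas] by (simp add: I_def)
  have comp_Some_meas: "(\<lambda>X. snd (X (Some k))) \<in> borel_measurable ?B" if "k \<in> {1..n}" for k
    using measurable_compose[OF measurable_component_singleton[of "Some k" I] snd_meas] that
    by (simp add: I_def J_def)
  have G_meas_borel: "G \<in> borel_measurable ?B"
    unfolding G_def
    by (intro borel_measurable_times borel_measurable_prod measurable_compose[OF _ g_meas] f_comp_meas
        comp_None_meas comp_Some_meas) auto
  have sets_P: "sets ?P = sets ?B"
    by (rule sets_PiM_cong) auto
  have G_meas: "G \<in> borel_measurable ?P"
    using G_meas_borel by (simp add: measurable_cong_sets[OF sets_P refl])
  have "(\<lambda>p. (snd p)(None := fst p)) \<in> measurable (PYZs None \<Otimes>\<^sub>M ?Q) ?P"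
    by (rule measurable_fun_upd[where J=J]) (auto simp: I_def)
  then have update_meas: "(\<lambda>(x, X). X(None := x)) \<in> measurable (PYZs None \<Otimes>\<^sub>M ?Q) ?P"
    by (simp add: case_prod_beta')
  interpret PQ: pair_sigma_finite "PYZs None" ?Q
    by (intro pair_sigma_finite.intro prob_space_imp_sigma_finite prob_space_PYZs prob_space_PiM)
  have "(\<integral>\<omega>. g (Y \<omega>) * (\<Prod>k\<in>{1..n}. f k (Y \<omega>) (Zs k \<omega>)) \<partial>M) = (\<integral>\<omega>. G (\<lambda>i\<in>I. YZs i \<omega>) \<partial>M)"
    by (rule Bochner_Integration.integral_cong[OF refl]) (simp add: G_def I_def J_def YZs_def)
  also have "\<dots> = (\<integral>X. G X \<partial>distr M ?B (\<lambda>\<omega>. \<lambda>i\<in>I. YZs i \<omega>))"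
    by (rule integral_distr[symmetric, OF measurable_restrict G_meas_borel]) simp
  also have "distr M ?B (\<lambda>\<omega>. \<lambda>i\<in>I. YZs i \<omega>) = ?P"
    using indep_vars_YZs[of n] indep_vars_iff_distr_eq_PiM'[of I YZs "\<lambda>_. borel"]
    by (simp add: I_def J_def PYZs_def)
  also have "?P = distr (PYZs None \<Otimes>\<^sub>M ?Q) ?P (\<lambda>(x, X). X(None := x))"
    unfolding I_def by (rule distr_pair_PiM_eq_PiM[symmetric]) (auto simp: J_def intro: prob_space_PYZs)
  also have "(\<integral>X. G X \<partial>\<dots>) = (\<integral>p. G ((\<lambda>(x, X). X(None := x)) p) \<partial>(PYZs None \<Otimes>\<^sub>M ?Q))"
    by (rule integral_distr[OF update_meas G_meas])
  also have "\<dots> = (\<integral>x. (\<integral>X. G (X(None := x)) \<partial>?Q) \<partial>PYZs None)"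
  proof -
    have "integrable (PYZs None \<Otimes>\<^sub>M ?Q) (\<lambda>p. G ((\<lambda>(x, X). X(None := x)) p))"
    proof (rule integrable_if_norm_le_1)
      show "prob_space (PYZs None \<Otimes>\<^sub>M ?Q)"
        by (intro prob_space_pair prob_space_PYZs prob_space_PiM)
      show "(\<lambda>p. G ((\<lambda>(x, X). X(None := x)) p)) \<in> borel_measurable (PYZs None \<Otimes>\<^sub>M ?Q)"
        by (rule measurable_compose[OF update_meas G_meas])
      show "norm (G ((\<lambda>(x, X). X(None := x)) p)) \<le> 1" for p
        unfolding G_def norm_mult prod_norm[symmetric]
        by (intro mult_le_one prod_le_1 norm_ge_zero g_le_1 f_le_1 prod_nonneg conjI)
    qed
    from PQ.integral_fst'[OF this] show ?thesis by simp
  qed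
  also have "\<dots> = (\<integral>x. g (fst x) * (\<Prod>k\<in>{1..n}. \<integral>z. f k (fst x) z \<partial>PZ) \<partial>PYZs None)"
  proof (rule Bochner_Integration.integral_cong[OF refl])
    fix x :: "(real^'d) \<times> (real^'q)"
    have "(\<lambda>z. f k (fst x) z) \<in> borel_measurable borel" for k
      by measurable
    then have "(\<integral>X. (\<Prod>k\<in>{1..n}. f k (fst x) (snd (X (Some k)))) \<partial>?Q)
        = (\<Prod>k\<in>{1..n}. \<integral>z. f k (fst x) z \<partial>PZ)"
      unfolding J_def by (rule integral_PiM_PYZs_Some) (rule f_le_1)
    then show "(\<integral>X. G (X(None := x)) \<partial>?Q) = g (fst x) * (\<Prod>k\<in>{1..n}. \<integral>z. f k (fst x) z \<partial>PZ)"
      by (simp add: G_def J_def)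
  qed
  also have "\<dots> = (\<integral>\<omega>. g (fst (YZs None \<omega>)) * (\<Prod>k\<in>{1..n}. \<integral>z. f k (fst (YZs None \<omega>)) z \<partial>PZ) \<partial>M)"
    unfolding PYZs_def
    by (rule integral_distr) (simp, intro borel_measurable_times borel_measurable_prod
        measurable_compose[OF fst_meas] g_meas measurable_integral_PZ f_meas)
  finally show ?thesis
    by (simp add: YZs_def)
qed

definition "FY = vimage_algebra (space M) Y borel"

lemma subalgebra_FY: "subalgebra M FY"
  unfolding subalgebra_def FY_def using sets_image_in_sets[OF refl Y_meas] by simp

lemma Y_measurable_FY: "Y \<in> borel_measurable FY"
  unfolding FY_def by (rule measurable_vimage_algebra1) simp

lemma integral_YZ_PZ:
  fixes h :: "real^'d \<Rightarrow> real^'q \<Rightarrow> real"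
  assumes h_meas: "(\<lambda>p. h (fst p) (snd p)) \<in> borel_measurable (borel \<Otimes>\<^sub>M borel)"
    and h_int: "integrable M (\<lambda>\<omega>. h (Y \<omega>) (Z \<omega>))"
  shows "integrable M (\<lambda>\<omega>. \<integral>z. h (Y \<omega>) z \<partial>PZ)"
    and "(\<integral>\<omega>. h (Y \<omega>) (Z \<omega>) \<partial>M) = (\<integral>\<omega>. (\<integral>z. h (Y \<omega>) z \<partial>PZ) \<partial>M)"
proof -
  interpret PP: pair_sigma_finite PY PZ by (rule pair_sigma_finite_PY_PZ)
  have YZ_meas: "(\<lambda>\<omega>. (Y \<omega>, Z \<omega>)) \<in> measurable M (borel \<Otimes>\<^sub>M borel)" by measurable
  have H_meas: "(\<lambda>y. \<integral>z. h y z \<partial>PZ) \<in> borel_measurable borel"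
    by (rule measurable_integral_PZ[OF h_meas])
  have "integrable (distr M (borel \<Otimes>\<^sub>M borel) (\<lambda>\<omega>. (Y \<omega>, Z \<omega>))) (\<lambda>p. h (fst p) (snd p))"
    using h_int by (subst integrable_distr_eq[OF YZ_meas h_meas]) simp
  then have int_prod: "integrable (PY \<Otimes>\<^sub>M PZ) (\<lambda>(y, z). h y z)"
    by (simp add: distr_YZ case_prod_beta')
  then show "integrable M (\<lambda>\<omega>. \<integral>z. h (Y \<omega>) z \<partial>PZ)"
    using PP.integrable_fst[OF int_prod] integrable_distr_eq[OF Y_meas H_meas] by simp
  have "(\<integral>\<omega>. h (Y \<omega>) (Z \<omega>) \<partial>M) = (\<integral>p. h (fst p) (snd p) \<partial>distr M (borel \<Otimes>\<^sub>M borel) (\<lambda>\<omega>. (Y \<omega>, Z \<omega>)))"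
    by (subst integral_distr[OF YZ_meas h_meas]) simp
  also have "\<dots> = integral\<^sup>L (PY \<Otimes>\<^sub>M PZ) (\<lambda>(y, z). h y z)"
    by (simp add: distr_YZ case_prod_beta')
  also have "\<dots> = (\<integral>y. (\<integral>z. h y z \<partial>PZ) \<partial>PY)"
    by (rule PP.integral_fst[OF int_prod, symmetric])
  also have "\<dots> = (\<integral>\<omega>. (\<integral>z. h (Y \<omega>) z \<partial>PZ) \<partial>M)"
    by (rule integral_distr[OF Y_meas H_meas])
  finally show "(\<integral>\<omega>. h (Y \<omega>) (Z \<omega>) \<partial>M) = (\<integral>\<omega>. (\<integral>z. h (Y \<omega>) z \<partial>PZ) \<partial>M)" .
qed

lemma AE_real_cond_exp_YZ:
  fixes h :: "real^'d \<Rightarrow> real^'q \<Rightarrow> real"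
  assumes h_meas: "(\<lambda>p. h (fst p) (snd p)) \<in> borel_measurable (borel \<Otimes>\<^sub>M borel)"
    and h_int: "integrable M (\<lambda>\<omega>. h (Y \<omega>) (Z \<omega>))"
  shows "AE \<omega> in M. real_cond_exp M FY (\<lambda>\<omega>. h (Y \<omega>) (Z \<omega>)) \<omega> = (\<integral>z. h (Y \<omega>) z \<partial>PZ)"
proof -
  interpret finite_measure_subalgebra M FY
    by unfold_locales (rule subalgebra_FY)
  have [measurable]: "(\<lambda>y. \<integral>z. h y z \<partial>PZ) \<in> borel_measurable borel"
    by (rule measurable_integral_PZ[OF h_meas])
  show ?thesis
  proof (rule real_cond_exp_charact)
    show "(\<lambda>\<omega>. \<integral>z. h (Y \<omega>) z \<partial>PZ) \<in> borel_measurable FY"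
      by (rule measurable_compose[OF Y_measurable_FY]) simp
    fix A assume "A \<in> sets FY"
    then obtain B where B[measurable]: "B \<in> sets borel" and A: "A = Y -` B \<inter> space M"
      unfolding FY_def by (subst (asm) sets_vimage_algebra2) auto
    have "integrable M (\<lambda>\<omega>. h (Y \<omega>) (Z \<omega>) * indicator (Y -` B \<inter> space M) \<omega>)"
      using h_int by (intro integrable_real_mult_indicator) auto
    then have int_B: "integrable M (\<lambda>\<omega>. indicator B (Y \<omega>) * h (Y \<omega>) (Z \<omega>))"
      by (rule iffD1[OF Bochner_Integration.integrable_cong[OF refl], rotated]) (auto simp: indicator_def)
    have "(\<integral>\<omega>\<in>A. h (Y \<omega>) (Z \<omega>) \<partial>M) = (\<integral>\<omega>. indicator B (Y \<omega>) * h (Y \<omega>) (Z \<omega>) \<partial>M)"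
      unfolding set_lebesgue_integral_def A
      by (rule Bochner_Integration.integral_cong[OF refl]) (auto simp: indicator_def)
    also have "\<dots> = (\<integral>\<omega>. (\<integral>z. indicator B (Y \<omega>) * h (Y \<omega>) z \<partial>PZ) \<partial>M)"
      using h_meas by (intro integral_YZ_PZ(2) int_B) measurable
    also have "\<dots> = (\<integral>\<omega>\<in>A. (\<integral>z. h (Y \<omega>) z \<partial>PZ) \<partial>M)"
      unfolding set_lebesgue_integral_def A
      by (rule Bochner_Integration.integral_cong[OF refl]) (auto simp: indicator_def)
    finally show "(\<integral>\<omega>\<in>A. h (Y \<omega>) (Z \<omega>) \<partial>M) = (\<integral>\<omega>\<in>A. (\<integral>z. h (Y \<omega>) z \<partial>PZ) \<partial>M)" .
  qed (use h_int integral_YZ_PZ(1)[OF h_meas h_int] in auto)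
qed

definition "cmean y = (\<integral>z. \<phi> y z \<partial>PZ)"
definition "centred y z = \<phi> y z - cmean y"
definition "cvar y = (\<integral>z. (centred y z)^2 \<partial>PZ)"

definition "L2_fibre y \<longleftrightarrow> (\<integral>\<^sup>+z. ennreal ((\<phi> y z)^2) \<partial>PZ) < \<infinity>"

lemma cmean_measurable[measurable]: "cmean \<in> borel_measurable borel"
  unfolding cmean_def by (rule measurable_integral_PZ[OF phi_measurable_pair])

lemma centred_measurable_pair: "(\<lambda>p. centred (fst p) (snd p)) \<in> borel_measurable (borel \<Otimes>\<^sub>M borel)"
  unfolding centred_def by measurable

lemma centred_measurable[measurable (raw)]:
  assumes [measurable]: "f \<in> borel_measurable Q" "g \<in> borel_measurable Q"
  shows "(\<lambda>x. centred (f x) (g x)) \<in> borel_measurable Q"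
  unfolding centred_def by measurable

lemma cvar_measurable[measurable]: "cvar \<in> borel_measurable borel"
  unfolding cvar_def by (rule measurable_integral_PZ) measurable

lemma cvar_nonneg: "cvar y \<ge> 0"
  unfolding cvar_def by (rule integral_nonneg_AE) auto

lemma AE_L2_fibre: "AE \<omega> in M. L2_fibre (Y \<omega>)"
proof -
  interpret PP: pair_sigma_finite PY PZ by (rule pair_sigma_finite_PY_PZ)
  have YZ_meas: "(\<lambda>\<omega>. (Y \<omega>, Z \<omega>)) \<in> measurable M (borel \<Otimes>\<^sub>M borel)" by measurable
  have sq_meas: "(\<lambda>p. ennreal ((\<phi> (fst p) (snd p))^2)) \<in> borel_measurable (borel \<Otimes>\<^sub>M borel)"
    by measurable
  then have sq_meas': "(\<lambda>p. ennreal ((\<phi> (fst p) (snd p))^2)) \<in> borel_measurable (PY \<Otimes>\<^sub>M PZ)"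
    by (simp add: measurable_cong_sets[OF sets_pair_measure_cong[OF sets_distr sets_distr] refl])
  have "(\<integral>\<^sup>+\<omega>. ennreal ((\<phi> (Y \<omega>) (Z \<omega>))^2) \<partial>M) \<noteq> \<infinity>"
    using integrableD(2)[OF L2] by simp
  also have "(\<integral>\<^sup>+\<omega>. ennreal ((\<phi> (Y \<omega>) (Z \<omega>))^2) \<partial>M)
      = integral\<^sup>N (distr M (borel \<Otimes>\<^sub>M borel) (\<lambda>\<omega>. (Y \<omega>, Z \<omega>))) (\<lambda>p. ennreal ((\<phi> (fst p) (snd p))^2))"
    by (subst nn_integral_distr[OF YZ_meas]) (use sq_meas in simp_all)
  also have "\<dots> = (\<integral>\<^sup>+y. (\<integral>\<^sup>+z. ennreal ((\<phi> y z)^2) \<partial>PZ) \<partial>PY)"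
    by (simp add: distr_YZ PP.M2.nn_integral_fst[OF sq_meas', symmetric])
  finally have finite_integral: "(\<integral>\<^sup>+y. (\<integral>\<^sup>+z. ennreal ((\<phi> y z)^2) \<partial>PZ) \<partial>PY) \<noteq> \<infinity>" .
  have fibre_meas: "(\<lambda>y. \<integral>\<^sup>+z. ennreal ((\<phi> y z)^2) \<partial>PZ) \<in> borel_measurable borel"
    using PP.M2.borel_measurable_nn_integral_fst[OF sq_meas'] by simp
  then have "AE y in PY. (\<integral>\<^sup>+z. ennreal ((\<phi> y z)^2) \<partial>PZ) \<noteq> \<infinity>"
    by (intro nn_integral_PInf_AE finite_integral) simp
  then have "AE y in PY. L2_fibre y"
    by (simp add: L2_fibre_def top.not_eq_extremum)
  moreover from fibre_meas have "{y \<in> space borel. L2_fibre y} \<in> sets borel"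
    unfolding L2_fibre_def by measurable
  ultimately show ?thesis
    by (subst (asm) AE_distr_iff[OF Y_meas]) simp_all
qed

lemma L2_fibreD:
  assumes "L2_fibre y"
  shows "integrable PZ (centred y)" "integrable PZ (\<lambda>z. (centred y z)^2)"
    and "(\<integral>z. centred y z \<partial>PZ) = 0"
proof -
  interpret PZ: prob_space PZ by (rule prob_space_PZ)
  have phi_y_meas: "\<phi> y \<in> borel_measurable PZ"
    using measurable_Pair2[OF phi_measurable_pair, of y] by simp
  have int_sq: "integrable PZ (\<lambda>z. (\<phi> y z)^2)"
    by (rule integrableI_nonneg) (use assms in \<open>auto simp: L2_fibre_def\<close>)
  then have int: "integrable PZ (\<phi> y)"
    by (rule PZ.square_integrable_imp_integrable[OF phi_y_meas])
  then show "integrable PZ (centred y)"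
    unfolding centred_def by simp
  have "integrable PZ (\<lambda>z. (\<phi> y z)\<^sup>2 + (cmean y)\<^sup>2 - 2 * \<phi> y z * cmean y)"
    using int int_sq by (intro Bochner_Integration.integrable_diff Bochner_Integration.integrable_add
        integrable_mult_left integrable_mult_right PZ.integrable_const)
  then show "integrable PZ (\<lambda>z. (centred y z)^2)"
    by (simp add: centred_def power2_diff)
  show "(\<integral>z. centred y z \<partial>PZ) = 0"
    unfolding centred_def using int PZ.prob_space by (simp add: cmean_def)
qed

abbreviation "X0 \<equiv> real_cond_exp M FY (\<lambda>\<omega>. \<phi> (Y \<omega>) (Z \<omega>))"

lemma integrable_phi_YZ: "integrable M (\<lambda>\<omega>. \<phi> (Y \<omega>) (Z \<omega>))"
  by (rule square_integrable_imp_integrable[OF _ L2]) simp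

lemma AE_X0_eq_cmean: "AE \<omega> in M. X0 \<omega> = cmean (Y \<omega>)"
  using AE_real_cond_exp_YZ[OF phi_measurable_pair integrable_phi_YZ] by (simp add: cmean_def)

lemma integrable_centred_YZ_square: "integrable M (\<lambda>\<omega>. (centred (Y \<omega>) (Z \<omega>))^2)"
proof -
  interpret finite_measure_subalgebra M FY
    by unfold_locales (rule subalgebra_FY)
  have "integrable M (\<lambda>\<omega>. (X0 \<omega>)^2)"
    by (rule integrable_convex_cond_exp[where I=UNIV and q="\<lambda>x. x^2" and a=0 and b=0])
      (simp_all add: integrable_phi_YZ L2 convex_power2)
  then have "integrable M (\<lambda>\<omega>. 2 * (\<phi> (Y \<omega>) (Z \<omega>))^2 + 2 * (X0 \<omega>)^2)"
    using L2 by simp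
  then have "integrable M (\<lambda>\<omega>. (\<phi> (Y \<omega>) (Z \<omega>) - X0 \<omega>)^2)"
  proof (rule Bochner_Integration.integrable_bound)
    have "(a - b)^2 \<le> 2 * a^2 + 2 * b^2" for a b :: real
      using zero_le_power2[of "a + b"] by (simp add: power2_eq_square algebra_simps)
    then show "AE \<omega> in M. norm ((\<phi> (Y \<omega>) (Z \<omega>) - X0 \<omega>)^2) \<le> norm (2 * (\<phi> (Y \<omega>) (Z \<omega>))^2 + 2 * (X0 \<omega>)^2)"
      by simp
  qed simp
  moreover have "AE \<omega> in M. (\<phi> (Y \<omega>) (Z \<omega>) - X0 \<omega>)^2 = (centred (Y \<omega>) (Z \<omega>))^2"
    using AE_X0_eq_cmean by (auto simp: centred_def)
  ultimately show ?thesis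
    by (subst integrable_cong_AE[symmetric]) simp_all
qed

lemma AE_cond_var_eq_cvar: "AE \<omega> in M. real_cond_var M FY (\<lambda>\<omega>. \<phi> (Y \<omega>) (Z \<omega>)) \<omega> = cvar (Y \<omega>)"
proof -
  interpret finite_measure_subalgebra M FY
    by unfold_locales (rule subalgebra_FY)
  have "AE \<omega> in M. real_cond_var M FY (\<lambda>\<omega>. \<phi> (Y \<omega>) (Z \<omega>)) \<omega>
      = real_cond_exp M FY (\<lambda>\<omega>. (centred (Y \<omega>) (Z \<omega>))^2) \<omega>"
    unfolding real_cond_var_def
    by (rule real_cond_exp_cong) (use AE_X0_eq_cmean in \<open>auto simp: centred_def\<close>)
  moreover have "AE \<omega> in M. real_cond_exp M FY (\<lambda>\<omega>. (centred (Y \<omega>) (Z \<omega>))^2) \<omega> = cvar (Y \<omega>)"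
    using AE_real_cond_exp_YZ[OF _ integrable_centred_YZ_square] centred_measurable_pair
    by (simp add: cvar_def)
  ultimately show ?thesis by auto
qed

section \<open>Sample means\<close>

definition "smean n \<omega> = (1 / real n) * (\<Sum>k\<in>{1..n}. \<phi> (Y \<omega>) (Zs k \<omega>))"
definition "serr n \<omega> = smean n \<omega> - cmean (Y \<omega>)"

lemma smean_measurable[measurable]: "smean n \<in> borel_measurable M"
  unfolding smean_def by measurable

lemma serr_measurable[measurable]: "serr n \<in> borel_measurable M"
  unfolding serr_def by measurable

lemma serr_eq_sum:
  assumes "n \<ge> 1"
  shows "serr n \<omega> = (\<Sum>k\<in>{1..n}. (1 / real n) * centred (Y \<omega>) (Zs k \<omega>))"
proof -
  have "(\<Sum>k\<in>{1..n}. (1 / real n) * centred (Y \<omega>) (Zs k \<omega>))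
      = (1 / real n) * (\<Sum>k\<in>{1..n}. centred (Y \<omega>) (Zs k \<omega>))"
    by (rule sum_distrib_left[symmetric])
  also have "(\<Sum>k\<in>{1..n}. centred (Y \<omega>) (Zs k \<omega>))
      = (\<Sum>k\<in>{1..n}. \<phi> (Y \<omega>) (Zs k \<omega>)) - real n * cmean (Y \<omega>)"
    by (simp add: centred_def sum_subtractf)
  also have "(1 / real n) * ((\<Sum>k\<in>{1..n}. \<phi> (Y \<omega>) (Zs k \<omega>)) - real n * cmean (Y \<omega>)) = serr n \<omega>"
    using assms by (simp add: serr_def smean_def right_diff_distrib)
  finally show ?thesis ..
qed

text \<open>The characteristic function of the summands \<open>\<phi>(Y, Z\<^sup>(\<^sup>k\<^sup>)) - X0\<close> conditionally on \<open>Y = y\<close>.\<close>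
abbreviation "cchar y \<equiv> char (distr PZ borel (centred y))"

lemma cchar_eq_integral: "cchar y s = (\<integral>z. iexp (s * centred y z) \<partial>PZ)"
  unfolding char_def by (rule integral_distr) simp_all

lemma cchar_measurable[measurable]: "(\<lambda>y. cchar y s) \<in> borel_measurable borel"
  unfolding cchar_eq_integral by (rule measurable_integral_PZ) measurable

lemma real_distribution_centred: "real_distribution (distr PZ borel (centred y))"
  by (rule prob_space.real_distribution_distr[OF prob_space_PZ]) simp

lemma norm_cchar_le_1: "norm (cchar y s) \<le> 1"
  by (rule real_distribution.cmod_char_le_1[OF real_distribution_centred])

lemma L2_fibre_centred_moments:
  assumes "L2_fibre y"
  shows "integrable (distr PZ borel (centred y)) (\<lambda>x. x)"
    and "integral\<^sup>L (distr PZ borel (centred y)) (\<lambda>x. x) = 0"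
    and "integrable (distr PZ borel (centred y)) (\<lambda>x. x^2)"
    and "integral\<^sup>L (distr PZ borel (centred y)) (\<lambda>x. x^2) = cvar y"
  using L2_fibreD[OF assms]
  by (simp_all add: integrable_distr_eq integral_distr cvar_def)

lemma cchar_power_tendsto_exp:
  assumes "L2_fibre y" "s \<longlonglongrightarrow> 0" "(\<lambda>n. real (a n) * (s n)^2) \<longlonglongrightarrow> c"
  shows "(\<lambda>n. cchar y (s n) ^ a n) \<longlonglongrightarrow> complex_of_real (exp (- cvar y * c / 2))"
  using real_distribution.char_power_tendsto_exp[OF real_distribution_centred
      L2_fibre_centred_moments(1,2,3)[OF assms(1)] assms(2,3)]
  by (simp add: L2_fibre_centred_moments(4)[OF assms(1)])

lemma char_indicator_mult_weighted_sum:
  fixes c :: "nat \<Rightarrow> real"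
  assumes [measurable]: "B \<in> sets borel"
  shows "char (distr M borel (\<lambda>\<omega>. indicator B (Y \<omega>) * (\<Sum>k\<in>{1..n}. c k * centred (Y \<omega>) (Zs k \<omega>)))) t
    = (\<integral>\<omega>. (if Y \<omega> \<in> B then \<Prod>k\<in>{1..n}. cchar (Y \<omega>) (t * c k) else 1) \<partial>M)"
proof -
  define g :: "real^'d \<Rightarrow> complex" where "g y = indicator B y" for y
  have g_meas[measurable]: "g \<in> borel_measurable borel"
    unfolding g_def by measurable
  have g_le_1: "norm (g y) \<le> 1" for y
    by (simp add: g_def indicator_def)
  have iexp_sum: "iexp (t * (\<Sum>k\<in>{1..n}. c k * centred y (zs k)))
      = (\<Prod>k\<in>{1..n}. iexp (t * c k * centred y (zs k)))" for y zs
    by (simp add: exp_sum[symmetric] sum_distrib_left mult.assoc)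
  have int: "integrable M (\<lambda>\<omega>. g (Y \<omega>) * (\<Prod>k\<in>{1..n}. iexp (t * c k * centred (Y \<omega>) (Zs k \<omega>))))"
    "integrable M (\<lambda>\<omega>. g (Y \<omega>) * (\<Prod>k\<in>{1..n}. cchar (Y \<omega>) (t * c k)))"
    "integrable M (\<lambda>\<omega>. 1 - g (Y \<omega>))"
    by (intro integrable_if_norm_le_1 prob_space_axioms;
        simp add: g_def indicator_def norm_mult prod_norm[symmetric] prod_le_1 norm_cchar_le_1)+
  have "char (distr M borel (\<lambda>\<omega>. indicator B (Y \<omega>) * (\<Sum>k\<in>{1..n}. c k * centred (Y \<omega>) (Zs k \<omega>)))) t
      = (\<integral>\<omega>. iexp (t * (indicator B (Y \<omega>) * (\<Sum>k\<in>{1..n}. c k * centred (Y \<omega>) (Zs k \<omega>)))) \<partial>M)"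
    unfolding char_def by (rule integral_distr) simp_all
  also have "\<dots> = (\<integral>\<omega>. g (Y \<omega>) * (\<Prod>k\<in>{1..n}. iexp (t * c k * centred (Y \<omega>) (Zs k \<omega>))) + (1 - g (Y \<omega>)) \<partial>M)"
  proof (rule Bochner_Integration.integral_cong[OF refl])
    fix \<omega>
    show "iexp (t * (indicator B (Y \<omega>) * (\<Sum>k\<in>{1..n}. c k * centred (Y \<omega>) (Zs k \<omega>))))
        = g (Y \<omega>) * (\<Prod>k\<in>{1..n}. iexp (t * c k * centred (Y \<omega>) (Zs k \<omega>))) + (1 - g (Y \<omega>))"
      using iexp_sum[of "Y \<omega>" "\<lambda>k. Zs k \<omega>"] by (cases "Y \<omega> \<in> B") (simp_all add: g_def)
  qed
  also have "\<dots> = (\<integral>\<omega>. g (Y \<omega>) * (\<Prod>k\<in>{1..n}. iexp (t * c k * centred (Y \<omega>) (Zs k \<omega>))) \<partial>M)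
      + (\<integral>\<omega>. 1 - g (Y \<omega>) \<partial>M)"
    by (rule Bochner_Integration.integral_add[OF int(1,3)])
  also have "(\<integral>\<omega>. g (Y \<omega>) * (\<Prod>k\<in>{1..n}. iexp (t * c k * centred (Y \<omega>) (Zs k \<omega>))) \<partial>M)
      = (\<integral>\<omega>. g (Y \<omega>) * (\<Prod>k\<in>{1..n}. cchar (Y \<omega>) (t * c k)) \<partial>M)"
    unfolding cchar_eq_integral
  proof (rule integral_mult_prod_Zs[OF g_meas g_le_1])
    show "(\<lambda>p. iexp (t * c k * centred (fst p) (snd p))) \<in> borel_measurable (borel \<Otimes>\<^sub>M borel)" for k
      by measurable
  qed simp
  also have "\<dots> + (\<integral>\<omega>. 1 - g (Y \<omega>) \<partial>M)
      = (\<integral>\<omega>. g (Y \<omega>) * (\<Prod>k\<in>{1..n}. cchar (Y \<omega>) (t * c k)) + (1 - g (Y \<omega>)) \<partial>M)"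
    by (rule Bochner_Integration.integral_add[OF int(2,3), symmetric])
  also have "\<dots> = (\<integral>\<omega>. (if Y \<omega> \<in> B then \<Prod>k\<in>{1..n}. cchar (Y \<omega>) (t * c k) else 1) \<partial>M)"
    by (intro Bochner_Integration.integral_cong refl) (simp add: g_def)
  finally show ?thesis .
qed

lemma char_serr:
  assumes "n \<ge> 1"
  shows "char (distr M borel (serr n)) t = (\<integral>\<omega>. cchar (Y \<omega>) (t / real n) ^ n \<partial>M)"
  using char_indicator_mult_weighted_sum[of UNIV "\<lambda>_. 1 / real n" n t]
  by (simp add: serr_eq_sum[OF assms, abs_def])

lemma char_serr_tendsto_1: "(\<lambda>n. char (distr M borel (serr n)) t) \<longlonglongrightarrow> 1"
proof -
  have "(\<lambda>n. \<integral>\<omega>. cchar (Y \<omega>) (t / real n) ^ n \<partial>M) \<longlonglongrightarrow> (\<integral>\<omega>. 1 \<partial>M)"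
  proof (rule integral_dominated_convergence[where w="\<lambda>_. 1"])
    show "AE \<omega> in M. norm (cchar (Y \<omega>) (t / real n) ^ n) \<le> 1" for n
      by (simp add: norm_power power_le_one norm_cchar_le_1)
    have s0: "(\<lambda>n. t / real n) \<longlonglongrightarrow> 0"
      by (intro tendsto_divide_0[OF tendsto_const] filterlim_real_sequentially
          filterlim_at_top_imp_at_infinity)
    have as: "(\<lambda>n. real n * (t / real n)^2) \<longlonglongrightarrow> 0"
    proof (rule Lim_transform_eventually)
      show "(\<lambda>n. t^2 / real n) \<longlonglongrightarrow> 0"
        by (intro tendsto_divide_0[OF tendsto_const] filterlim_real_sequentially
            filterlim_at_top_imp_at_infinity)
      show "\<forall>\<^sub>F n in sequentially. t^2 / real n = real n * (t / real n)^2"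
        using eventually_gt_at_top[of 0] by eventually_elim (simp add: power2_eq_square)
    qed
    show "AE \<omega> in M. (\<lambda>n. cchar (Y \<omega>) (t / real n) ^ n) \<longlonglongrightarrow> 1"
      using AE_L2_fibre
    proof eventually_elim
      case (elim \<omega>)
      from cchar_power_tendsto_exp[OF elim s0 as] show ?case by simp
    qed
  qed simp_all
  moreover have "\<forall>\<^sub>F n in sequentially.
      (\<integral>\<omega>. cchar (Y \<omega>) (t / real n) ^ n \<partial>M) = char (distr M borel (serr n)) t"
    using eventually_ge_at_top[of 1] by eventually_elim (simp add: char_serr)
  ultimately show ?thesis
    by (simp add: Lim_transform_eventually prob_space)
qed

lemma tendsto_prob_crossing_serr:
  "(\<lambda>n. prob {\<omega> \<in> space M. cmean (Y \<omega>) \<noteq> \<xi> \<and> \<bar>cmean (Y \<omega>) - \<xi>\<bar> \<le> \<bar>serr n \<omega>\<bar>}) \<longlonglongrightarrow> 0"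
  using tendsto_prob_crossing[of "\<lambda>\<omega>. cmean (Y \<omega>) - \<xi>" serr]
    tendsto_prob_abs_ge_if_char_tendsto_1[OF serr_measurable char_serr_tendsto_1]
  by simp

section \<open>Increments of the positive part\<close>

definition "incr \<xi> n n' \<omega> = sqrt (real n') * (max (smean n' \<omega> - \<xi>) 0 - max (smean n \<omega> - \<xi>) 0)"
definition "lin_incr \<xi> n n' \<omega> = indicator {y. \<xi> < cmean y} (Y \<omega>) * (sqrt (real n') * (smean n' \<omega> - smean n \<omega>))"
definition "limit_rv \<xi> (Mm::nat) \<omega> = indicator {\<xi><..} (cmean (Y \<omega>)) * (sqrt ((real Mm - 1) * cvar (Y \<omega>)) * N \<omega>)"

lemma incr_measurable[measurable]: "incr \<xi> n n' \<in> borel_measurable M"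
  unfolding incr_def by measurable

lemma lin_incr_measurable[measurable]: "lin_incr \<xi> n n' \<in> borel_measurable M"
  unfolding lin_incr_def by measurable

lemma limit_rv_measurable[measurable]: "limit_rv \<xi> Mm \<in> borel_measurable M"
  unfolding limit_rv_def by measurable

text \<open>Away from the kink of \<open>x \<mapsto> (x - \<xi>)\<^sup>+\<close> both sample means lie on the same side of \<open>\<xi>\<close>.\<close>
lemma incr_eq_lin_incr:
  assumes "cmean (Y \<omega>) \<noteq> \<xi>"
    and "\<bar>serr n \<omega>\<bar> < \<bar>cmean (Y \<omega>) - \<xi>\<bar>" "\<bar>serr n' \<omega>\<bar> < \<bar>cmean (Y \<omega>) - \<xi>\<bar>"
  shows "incr \<xi> n n' \<omega> = lin_incr \<xi> n n' \<omega>"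
  using assms by (cases "\<xi> < cmean (Y \<omega>)") (auto simp: incr_def lin_incr_def serr_def)

lemma smean_diff_eq_sum:
  assumes "1 \<le> n" "n \<le> n'"
  shows "smean n' \<omega> - smean n \<omega>
    = (\<Sum>k\<in>{1..n'}. (1 / real n' - (if k \<le> n then 1 / real n else 0)) * centred (Y \<omega>) (Zs k \<omega>))"
proof -
  have "{k \<in> {1..n'}. k \<le> n} = {1..n}"
    using assms by auto
  then have restrict: "(\<Sum>k\<in>{1..n}. f k) = (\<Sum>k\<in>{1..n'}. if k \<le> n then f k else 0)" for f :: "nat \<Rightarrow> real"
    by (metis finite_atLeastAtMost sum.inter_filter)
  have "smean n' \<omega> - smean n \<omega> = serr n' \<omega> - serr n \<omega>"
    by (simp add: serr_def)
  also have "\<dots> = (\<Sum>k\<in>{1..n'}. (1 / real n') * centred (Y \<omega>) (Zs k \<omega>))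
      - (\<Sum>k\<in>{1..n'}. (if k \<le> n then 1 / real n else 0) * centred (Y \<omega>) (Zs k \<omega>))"
    unfolding serr_eq_sum[OF assms(1)] serr_eq_sum[OF order.trans[OF assms]] restrict
    by (intro arg_cong2[where f=minus] sum.cong) auto
  finally show ?thesis
    by (simp add: sum_subtractf[symmetric] left_diff_distrib)
qed

lemma char_lin_incr:
  assumes "1 \<le> n" "n \<le> n'"
  shows "char (distr M borel (lin_incr \<xi> n n')) t = (\<integral>\<omega>. (if \<xi> < cmean (Y \<omega>) then
      cchar (Y \<omega>) (t * sqrt (real n') * (1 / real n' - 1 / real n)) ^ n
        * cchar (Y \<omega>) (t * sqrt (real n') * (1 / real n')) ^ (n' - n)
     else 1) \<partial>M)"
proof -
  define c where "c k = sqrt (real n') * (1 / real n' - (if k \<le> n then 1 / real n else 0))" for k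
  have "lin_incr \<xi> n n' = (\<lambda>\<omega>. indicator {y. \<xi> < cmean y} (Y \<omega>) * (\<Sum>k\<in>{1..n'}. c k * centred (Y \<omega>) (Zs k \<omega>)))"
    using assms by (simp add: lin_incr_def smean_diff_eq_sum c_def sum_distrib_left mult.assoc fun_eq_iff)
  moreover have "{y. \<xi> < cmean y} \<in> sets borel"
    by measurable
  ultimately have "char (distr M borel (lin_incr \<xi> n n')) t
      = (\<integral>\<omega>. (if \<xi> < cmean (Y \<omega>) then \<Prod>k\<in>{1..n'}. cchar (Y \<omega>) (t * c k) else 1) \<partial>M)"
    using char_indicator_mult_weighted_sum[of "{y. \<xi> < cmean y}" c n' t] by simp
  also have "\<dots> = (\<integral>\<omega>. (if \<xi> < cmean (Y \<omega>) then
      cchar (Y \<omega>) (t * sqrt (real n') * (1 / real n' - 1 / real n)) ^ n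
        * cchar (Y \<omega>) (t * sqrt (real n') * (1 / real n')) ^ (n' - n)
     else 1) \<partial>M)"
  proof (intro Bochner_Integration.integral_cong refl if_cong)
    fix \<omega>
    have "{1..n'} = {1..n} \<union> {n+1..n'}" "{1..n} \<inter> {n+1..n'} = {}"
      using assms by auto
    then have "(\<Prod>k\<in>{1..n'}. cchar (Y \<omega>) (t * c k))
        = (\<Prod>k\<in>{1..n}. cchar (Y \<omega>) (t * c k)) * (\<Prod>k\<in>{n+1..n'}. cchar (Y \<omega>) (t * c k))"
      by (simp add: prod.union_disjoint)
    also have "\<dots> = cchar (Y \<omega>) (t * sqrt (real n') * (1 / real n' - 1 / real n)) ^ n
        * cchar (Y \<omega>) (t * sqrt (real n') * (1 / real n')) ^ (n' - n)"
      by (simp add: c_def mult.assoc)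
    finally show "(\<Prod>k\<in>{1..n'}. cchar (Y \<omega>) (t * c k)) = \<dots>" .
  qed
  finally show ?thesis .
qed

lemma char_lin_incr_tendsto:
  assumes K: "K \<ge> 1" and Mm: "Mm > (1::nat)"
  shows "(\<lambda>l. char (distr M borel (lin_incr \<xi> (K * Mm ^ l) (K * Mm ^ Suc l))) t) \<longlonglongrightarrow>
    (\<integral>\<omega>. (if \<xi> < cmean (Y \<omega>) then complex_of_real (exp (- cvar (Y \<omega>) * (t^2 * (real Mm - 1)) / 2)) else 1) \<partial>M)"
proof -
  define n where "n l = K * Mm ^ l" for l
  define s\<^sub>1 where "s\<^sub>1 l = t * sqrt (real (n (Suc l))) * (1 / real (n (Suc l)) - 1 / real (n l))" for l
  define s\<^sub>2 where "s\<^sub>2 l = t * sqrt (real (n (Suc l))) * (1 / real (n (Suc l)))" for l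
  define c\<^sub>1 where "c\<^sub>1 = t^2 * (real Mm - 1)^2 / real Mm"
  define c\<^sub>2 where "c\<^sub>2 = t^2 * (real Mm - 1) / real Mm"
  note weights = geometric_increment_weights[OF K Mm, where t=t, folded n_def c\<^sub>1_def c\<^sub>2_def,
      folded s\<^sub>1_def[abs_def] s\<^sub>2_def[abs_def], folded s\<^sub>1_def s\<^sub>2_def]
  have c_sum: "c\<^sub>1 + c\<^sub>2 = t^2 * (real Mm - 1)"
    using Mm by (simp add: c\<^sub>1_def c\<^sub>2_def field_simps power2_eq_square)
  have exp_sum: "exp (- v * c\<^sub>1 / 2) * exp (- v * c\<^sub>2 / 2) = exp (- v * (t^2 * (real Mm - 1)) / 2)" for v
    unfolding c_sum[symmetric] by (simp add: exp_add[symmetric] field_simps)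
  have "(\<lambda>l. \<integral>\<omega>. (if \<xi> < cmean (Y \<omega>) then cchar (Y \<omega>) (s\<^sub>1 l) ^ n l * cchar (Y \<omega>) (s\<^sub>2 l) ^ (n (Suc l) - n l) else 1) \<partial>M)
     \<longlonglongrightarrow> (\<integral>\<omega>. (if \<xi> < cmean (Y \<omega>) then complex_of_real (exp (- cvar (Y \<omega>) * (t^2 * (real Mm - 1)) / 2)) else 1) \<partial>M)"
  proof (rule integral_dominated_convergence[where w="\<lambda>_. 1"])
    show "AE \<omega> in M. norm (if \<xi> < cmean (Y \<omega>) then cchar (Y \<omega>) (s\<^sub>1 l) ^ n l * cchar (Y \<omega>) (s\<^sub>2 l) ^ (n (Suc l) - n l) else 1) \<le> 1" for l
      by (auto simp: norm_mult norm_power intro!: mult_le_one power_le_one norm_cchar_le_1)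
    show "AE \<omega> in M. (\<lambda>l. if \<xi> < cmean (Y \<omega>) then cchar (Y \<omega>) (s\<^sub>1 l) ^ n l * cchar (Y \<omega>) (s\<^sub>2 l) ^ (n (Suc l) - n l) else 1)
       \<longlonglongrightarrow> (if \<xi> < cmean (Y \<omega>) then complex_of_real (exp (- cvar (Y \<omega>) * (t^2 * (real Mm - 1)) / 2)) else 1)"
      using AE_L2_fibre
    proof eventually_elim
      case (elim \<omega>)
      have "(\<lambda>l. cchar (Y \<omega>) (s\<^sub>1 l) ^ n l * cchar (Y \<omega>) (s\<^sub>2 l) ^ (n (Suc l) - n l))
          \<longlonglongrightarrow> complex_of_real (exp (- cvar (Y \<omega>) * c\<^sub>1 / 2)) * complex_of_real (exp (- cvar (Y \<omega>) * c\<^sub>2 / 2))"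
        using weights by (intro tendsto_mult cchar_power_tendsto_exp elim) simp_all
      then show ?case
        using exp_sum[of "cvar (Y \<omega>)"] by (simp add: of_real_mult[symmetric] del: of_real_mult)
    qed
  qed simp_all
  moreover have "char (distr M borel (lin_incr \<xi> (n l) (n (Suc l)))) t =
      (\<integral>\<omega>. (if \<xi> < cmean (Y \<omega>) then cchar (Y \<omega>) (s\<^sub>1 l) ^ n l * cchar (Y \<omega>) (s\<^sub>2 l) ^ (n (Suc l) - n l) else 1) \<partial>M)" for l
    unfolding s\<^sub>1_def s\<^sub>2_def using K Mm by (intro char_lin_incr) (auto simp: n_def)
  ultimately show ?thesis
    by (simp add: n_def)
qed

lemma char_limit_rv:
  assumes Mm: "Mm > (1::nat)"
  shows "char (distr M borel (limit_rv \<xi> Mm)) t =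
    (\<integral>\<omega>. (if \<xi> < cmean (Y \<omega>) then complex_of_real (exp (- cvar (Y \<omega>) * (t^2 * (real Mm - 1)) / 2)) else 1) \<partial>M)"
proof -
  define a where "a y = t * (indicator {\<xi><..} (cmean y) * sqrt ((real Mm - 1) * cvar y))" for y
  have [measurable]: "a \<in> borel_measurable borel"
    unfolding a_def by measurable
  define PN where "PN = distr M borel N"
  interpret PN: prob_space PN
    unfolding PN_def by (rule prob_space_distr) simp
  interpret PP: pair_sigma_finite PY PN
    by (intro pair_sigma_finite.intro prob_space_imp_sigma_finite prob_space_PY PN.prob_space_axioms)
  have YN_meas: "(\<lambda>\<omega>. (Y \<omega>, N \<omega>)) \<in> measurable M (borel \<Otimes>\<^sub>M borel)"
    by measurable
  have f_meas: "(\<lambda>p. iexp (a (fst p) * snd p)) \<in> borel_measurable (borel \<Otimes>\<^sub>M borel)"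
    by measurable
  have "integrable (PY \<Otimes>\<^sub>M PN) (\<lambda>(y, x). iexp (a y * x))"
  proof (rule integrable_if_norm_le_1)
    show "prob_space (PY \<Otimes>\<^sub>M PN)"
      by (intro prob_space_pair prob_space_PY PN.prob_space_axioms)
    show "(\<lambda>(y, x). iexp (a y * x)) \<in> borel_measurable (PY \<Otimes>\<^sub>M PN)"
      using f_meas unfolding PN_def
      by (simp add: case_prod_beta' measurable_cong_sets[OF sets_pair_measure_cong[OF sets_distr sets_distr] refl])
  qed (simp add: case_prod_beta')
  note int = this
  have "char (distr M borel (limit_rv \<xi> Mm)) t = (\<integral>\<omega>. iexp (a (Y \<omega>) * N \<omega>) \<partial>M)"
    unfolding char_def by (subst integral_distr) (simp_all add: limit_rv_def a_def mult.assoc)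
  also have "\<dots> = (\<integral>p. iexp (a (fst p) * snd p) \<partial>distr M (borel \<Otimes>\<^sub>M borel) (\<lambda>\<omega>. (Y \<omega>, N \<omega>)))"
    by (subst integral_distr[OF YN_meas f_meas]) simp
  also have "\<dots> = (\<integral>y. (\<integral>x. iexp (a y * x) \<partial>PN) \<partial>PY)"
    using PP.integral_fst[OF int] by (simp add: distr_YN PN_def case_prod_beta')
  also have "\<dots> = (\<integral>y. complex_of_real (exp (- ((a y)^2) / 2)) \<partial>PY)"
  proof (intro Bochner_Integration.integral_cong refl)
    fix y
    have "(\<integral>x. iexp (a y * x) \<partial>PN) = char std_normal_distribution (a y)"
      unfolding char_def PN_def N_normal ..
    then show "(\<integral>x. iexp (a y * x) \<partial>PN) = complex_of_real (exp (- ((a y)^2) / 2))"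
      by (simp add: char_std_normal_distribution)
  qed
  also have "\<dots> = (\<integral>\<omega>. complex_of_real (exp (- ((a (Y \<omega>))^2) / 2)) \<partial>M)"
    by (rule integral_distr) simp_all
  also have "\<dots> = (\<integral>\<omega>. (if \<xi> < cmean (Y \<omega>) then complex_of_real (exp (- cvar (Y \<omega>) * (t^2 * (real Mm - 1)) / 2)) else 1) \<partial>M)"
  proof (intro Bochner_Integration.integral_cong refl)
    fix \<omega>
    have "0 \<le> (real Mm - 1) * cvar (Y \<omega>)"
      using Mm cvar_nonneg[of "Y \<omega>"] by simp
    then show "complex_of_real (exp (- ((a (Y \<omega>))^2) / 2))
        = (if \<xi> < cmean (Y \<omega>) then complex_of_real (exp (- cvar (Y \<omega>) * (t^2 * (real Mm - 1)) / 2)) else 1)"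
      by (simp add: a_def power_mult_distrib indicator_def algebra_simps)
  qed
  finally show ?thesis .
qed

lemma weak_conv_incr:
  assumes K: "K \<ge> 1" and Mm: "Mm > (1::nat)" and cdf_cont: "isCont (cdf (distr M borel X0)) \<xi>"
  shows "weak_conv_m (\<lambda>l. distr M borel (incr \<xi> (K * Mm ^ l) (K * Mm ^ Suc l))) (distr M borel (limit_rv \<xi> Mm))"
proof (rule levy_continuity)
  fix t
  define n where "n l = K * Mm ^ l" for l
  define crossing where "crossing m = {\<omega> \<in> space M. cmean (Y \<omega>) \<noteq> \<xi> \<and> \<bar>cmean (Y \<omega>) - \<xi>\<bar> \<le> \<bar>serr m \<omega>\<bar>}" for m
  interpret cmean_distr: real_distribution "distr M borel (\<lambda>\<omega>. cmean (Y \<omega>))"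
    by simp
  have "distr M borel X0 = distr M borel (\<lambda>\<omega>. cmean (Y \<omega>))"
    by (rule distr_cong_AE[OF refl refl AE_X0_eq_cmean]) simp_all
  then have "measure (distr M borel (\<lambda>\<omega>. cmean (Y \<omega>))) {\<xi>} = 0"
    using cdf_cont by (simp add: cmean_distr.isCont_cdf)
  then have no_atom: "prob {\<omega> \<in> space M. cmean (Y \<omega>) = \<xi>} = 0"
    by (subst (asm) measure_distr) (auto simp: vimage_def Int_def conj_commute)
  txt \<open>The increment and its linearisation can only differ where \<open>X0 = \<xi>\<close> or where one of the
    two sample means has crossed \<open>\<xi>\<close>.\<close>
  have bound: "norm (char (distr M borel (incr \<xi> (n l) (n (Suc l)))) t - char (distr M borel (lin_incr \<xi> (n l) (n (Suc l)))) t)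
      \<le> 2 * (prob {\<omega> \<in> space M. cmean (Y \<omega>) = \<xi>} + prob (crossing (n l)) + prob (crossing (n (Suc l))))" for l
  proof -
    let ?B = "{\<omega> \<in> space M. cmean (Y \<omega>) = \<xi>} \<union> crossing (n l) \<union> crossing (n (Suc l))"
    have B_sets: "?B \<in> sets M"
      unfolding crossing_def by measurable
    have "incr \<xi> (n l) (n (Suc l)) \<omega> = lin_incr \<xi> (n l) (n (Suc l)) \<omega>" if "\<omega> \<in> space M - ?B" for \<omega>
      using that unfolding crossing_def by (intro incr_eq_lin_incr) auto
    then have "norm (char (distr M borel (incr \<xi> (n l) (n (Suc l)))) t - char (distr M borel (lin_incr \<xi> (n l) (n (Suc l)))) t)
        \<le> 2 * prob ?B"
      by (rule norm_char_distr_diff_le[OF incr_measurable lin_incr_measurable B_sets])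
    also have "prob ?B \<le> prob ({\<omega> \<in> space M. cmean (Y \<omega>) = \<xi>} \<union> crossing (n l)) + prob (crossing (n (Suc l)))"
      unfolding crossing_def by (rule measure_Un_le) auto
    also have "prob ({\<omega> \<in> space M. cmean (Y \<omega>) = \<xi>} \<union> crossing (n l))
        \<le> prob {\<omega> \<in> space M. cmean (Y \<omega>) = \<xi>} + prob (crossing (n l))"
      unfolding crossing_def by (rule measure_Un_le) auto
    finally show ?thesis by simp
  qed
  have bound_to_0: "(\<lambda>l. 2 * (prob {\<omega> \<in> space M. cmean (Y \<omega>) = \<xi>} + prob (crossing (n l)) + prob (crossing (n (Suc l)))))
      \<longlonglongrightarrow> 0"
  proof -
    have n_lim: "filterlim n sequentially sequentially"
      unfolding n_def by (rule filterlim_geometric_sample_sizes[OF K Mm])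
    have "filterlim (\<lambda>l. n (Suc l)) sequentially sequentially"
      using filterlim_compose[OF n_lim filterlim_Suc] by (simp add: o_def)
    then have "(\<lambda>l. prob (crossing (n (Suc l)))) \<longlonglongrightarrow> 0"
      unfolding crossing_def by (rule filterlim_compose[OF tendsto_prob_crossing_serr])
    moreover have "(\<lambda>l. prob (crossing (n l))) \<longlonglongrightarrow> 0"
      unfolding crossing_def by (rule filterlim_compose[OF tendsto_prob_crossing_serr n_lim])
    ultimately have "(\<lambda>l. 2 * (0 + prob (crossing (n l)) + prob (crossing (n (Suc l))))) \<longlonglongrightarrow> 2 * (0 + 0 + 0)"
      by (intro tendsto_mult_left tendsto_add tendsto_const)
    then show ?thesis
      unfolding no_atom by simp
  qed
  have "(\<lambda>l. char (distr M borel (incr \<xi> (n l) (n (Suc l)))) t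
      - char (distr M borel (lin_incr \<xi> (n l) (n (Suc l)))) t) \<longlonglongrightarrow> 0"
    by (rule Lim_null_comparison[OF always_eventually[OF allI[OF bound]] bound_to_0])
  moreover have "(\<lambda>l. char (distr M borel (lin_incr \<xi> (n l) (n (Suc l)))) t) \<longlonglongrightarrow> char (distr M borel (limit_rv \<xi> Mm)) t"
    using char_lin_incr_tendsto[OF K Mm, of \<xi> t] char_limit_rv[OF Mm, of \<xi> t] by (simp add: n_def)
  ultimately have "(\<lambda>l. (char (distr M borel (incr \<xi> (n l) (n (Suc l)))) t - char (distr M borel (lin_incr \<xi> (n l) (n (Suc l)))) t)
       + char (distr M borel (lin_incr \<xi> (n l) (n (Suc l)))) t) \<longlonglongrightarrow> 0 + char (distr M borel (limit_rv \<xi> Mm)) t"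
    by (rule tendsto_add)
  then show "(\<lambda>l. char (distr M borel (incr \<xi> (K * Mm ^ l) (K * Mm ^ Suc l))) t) \<longlonglongrightarrow> char (distr M borel (limit_rv \<xi> Mm)) t"
    by (simp add: n_def)
qed simp_all

lemma distr_limit_rv_eq:
  "distr M borel (\<lambda>\<omega>. indicator {\<xi><..} (X0 \<omega>)
      * (sqrt ((real Mm - 1) * real_cond_var M FY (\<lambda>\<omega>. \<phi> (Y \<omega>) (Z \<omega>)) \<omega>) * N \<omega>))
    = distr M borel (limit_rv \<xi> Mm)"
proof (rule distr_cong_AE[OF refl refl])
  show "AE \<omega> in M. indicator {\<xi><..} (X0 \<omega>)
      * (sqrt ((real Mm - 1) * real_cond_var M FY (\<lambda>\<omega>. \<phi> (Y \<omega>) (Z \<omega>)) \<omega>) * N \<omega>) = limit_rv \<xi> Mm \<omega>"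
    using AE_X0_eq_cmean AE_cond_var_eq_cvar by eventually_elim (simp add: limit_rv_def)
qed (simp_all add: real_cond_var_def)

end

theorem mainTheorem7:
  fixes M :: "'a measure"
    and Y :: "'a \<Rightarrow> real ^ 'd"
    and Z :: "'a \<Rightarrow> real ^ 'q"
    and Zs :: "nat \<Rightarrow> 'a \<Rightarrow> real ^ 'q"
    and \<phi> :: "real ^ 'd \<Rightarrow> real ^ 'q \<Rightarrow> real"
    and N :: "'a \<Rightarrow> real"
    and K Mm :: nat
    and \<xi> :: real
  assumes "prob_space M"
    and "K \<ge> 1" and "Mm > 1"
    and Y_meas: "Y \<in> borel_measurable M"
    and Z_meas: "Z \<in> borel_measurable M"
    and Zs_meas: "\<And>k. Zs k \<in> borel_measurable M"
    and phi_meas: "(\<lambda>(y, z). \<phi> y z) \<in> borel_measurable borel"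
    and indep_YZ: "prob_space.indep_set M (sets (vimage_algebra (space M) Y borel))
                                          (sets (vimage_algebra (space M) Z borel))"
    and Zs_copies: "\<And>k. k \<ge> 1 \<Longrightarrow> distr M borel (Zs k) = distr M borel Z"
    and indep_Y_Zs: "prob_space.indep_sets M
          (\<lambda>i. case i of None \<Rightarrow> sets (vimage_algebra (space M) Y borel)
                       | Some k \<Rightarrow> sets (vimage_algebra (space M) (Zs k) borel))
          (insert None (Some ` {1..}))"
    and N_meas: "N \<in> borel_measurable M"
    and N_normal: "distr M borel N = density lborel std_normal_density"
    and indep_NY: "prob_space.indep_set M (sets (vimage_algebra (space M) Y borel))
                                          (sets (vimage_algebra (space M) N borel))"
    and L2: "integrable M (\<lambda>\<omega>. (\<phi> (Y \<omega>) (Z \<omega>))^2)"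
    and cdf_cont: "\<And>x. isCont (cdf (distr M borel
                     (real_cond_exp M (vimage_algebra (space M) Y borel) (\<lambda>\<omega>. \<phi> (Y \<omega>) (Z \<omega>))))) x"
  shows "weak_conv_m
           (\<lambda>l. distr M borel (\<lambda>\<omega>. (1 / sqrt (hstep K Mm (Suc l))) *
              (max (nested_X K Mm \<phi> Y Zs (Suc l) \<omega> - \<xi>) 0 - max (nested_X K Mm \<phi> Y Zs l \<omega> - \<xi>) 0)))
           (distr M borel (\<lambda>\<omega>.
              indicator {\<xi><..} (real_cond_exp M (vimage_algebra (space M) Y borel) (\<lambda>\<omega>. \<phi> (Y \<omega>) (Z \<omega>)) \<omega>)
              * (sqrt ((real Mm - 1) * real_cond_var M (vimage_algebra (space M) Y borel) (\<lambda>\<omega>. \<phi> (Y \<omega>) (Z \<omega>)) \<omega>)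
                 * N \<omega>)))"
proof -
  interpret nested_mc M Y Z Zs \<phi> N
    by (intro nested_mc.intro nested_mc_axioms.intro assms)
  have "(\<lambda>\<omega>. (1 / sqrt (hstep K Mm (Suc l))) *
      (max (nested_X K Mm \<phi> Y Zs (Suc l) \<omega> - \<xi>) 0 - max (nested_X K Mm \<phi> Y Zs l \<omega> - \<xi>) 0))
    = incr \<xi> (K * Mm ^ l) (K * Mm ^ Suc l)" for l
    by (simp add: fun_eq_iff incr_def smean_def nested_X_def hstep_def real_sqrt_divide)
  moreover have "isCont (cdf (distr M borel X0)) \<xi>"
    using cdf_cont unfolding FY_def .
  ultimately show ?thesis
    using weak_conv_incr[OF \<open>K \<ge> 1\<close> \<open>Mm > 1\<close>] distr_limit_rv_eq[of \<xi> Mm] by (simp add: FY_def)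
qed

end
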